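(* Let $n\in\mathbb{N}$ and let $p$ be a positive even integer. Let $A_{i_1,i_2,\dots,i_p}$, $(i_1,\dots,i_p)\in\{1,\dots,n\}^p$, be standard normal random variables. Let $g$ be a standard normal random variable, and for each $j\in\{1,\dots,p\}$ let $\mathbf{g}^{(j)}\in\mathbb{R}^{n}$ be a vector with standard normal entries and $A^{(j)}=(A^{(j)}_{i_1,\dots,i_p})_{(i_1,\dots,i_p)\in\{1,\dots,n\}^p}$ be an order-$p$ array with standard normal entries. Assume all these random variables are mutually independent. Let $\mathcal{S}^{(j)}\subseteq\mathbb{S}^n$, $1\le j\le p$, and write $\bar{\mathcal{S}}=(\mathcal{S}^{(j)})_{j=1}^p$. For $c_3>0$ define $$\varphi(p;\bar{\mathcal S},n)=\max_{\mathbf{x}^{(j)}\in\mathcal{S}^{(j)},\,1\le j\le p}\ \sum_{i_1,\dots,i_p=1}^n A_{i_1,\dots,i_p}\prod_{j=1}^p \mathbf{x}^{(j)}_{i_j},$$ $$\xi(p;\bar{\mathcal S},n,c_3)=\frac{1}{\sqrt n}\,\frac{1}{c_3}\log\Big(\mathbb{E}\, e^{c_3\varphi(p;\bar{\mathcal S},n)}\Big),$$ $$\xi_u(p;\bar{\mathcal S},n,c_3)=\frac{1}{\sqrt n}\left(-\frac{c_3}{2}(p-1)+\frac{1}{c_3}\log\Big(\mathbb{E}\, e^{c_3\max_{\mathbf{x}^{(j)}\in\mathcal S^{(j)}}\sum_{j=1}^p(\mathbf g^{(j)})^T\mathbf x^{(j)}}\Big)\right),$$ $$\xi_l(p;\bar{\mathcal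 S},n,c_3)=\frac{1}{\sqrt n}\,\frac{1}{c_3}\log\Big(\mathbb{E}\, e^{\frac{c_3}{\sqrt p}\max_{\mathbf{x}^{(j)}\in\mathcal S^{(j)}}\sum_{j=1}^p\sum_{i_1,\dots,i_p=1}^n A^{(j)}_{i_1,\dots,i_p}\prod_{k=1}^p \mathbf{x}^{(j)}_{i_k}}\Big).$$ Then for all real $c_{3,l}>0$ and $c_{3,u}>0$, $$\xi_l(p;\bar{\mathcal S},n,c_{3,l})\le \xi(p;\bar{\mathcal S},n,c_{3,l})\quad\text{and}\quad \xi(p;\bar{\mathcal S},n,c_{3,u})\le \xi_u(p;\bar{\mathcal S},n,c_{3,u}).$$
   Context: $\mathbb{S}^n=\{\mathbf x\in\mathbb R^n:\|\mathbf x\|_2=1\}$ denotes the unit sphere in $\mathbb R^n$. For a vector $\mathbf x$, $\mathbf x_i$ denotes its $i$-th coordinate. All maxima over the sets $\mathcal S^{(j)}$ are taken jointly over $(\mathbf x^{(1)},\dots,\mathbf x^{(p)})\in\mathcal S^{(1)}\times\cdots\times\mathcal S^{(p)}$. *)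

theory Defs
  imports "HOL-Probability.Probability"
begin

text \<open>Conventions: coordinates are indexed 0-based by i < n; the p factors by j < p.
  Vectors in R^n are functions nat => real vanishing outside {..<n}.
  Multi-indices (i_1,...,i_p) are lists of length p with entries < n.\<close>

definition unit_sphere :: "nat \<Rightarrow> (nat \<Rightarrow> real) set" where
  "unit_sphere n = {x. (\<forall>i\<ge>n. x i = 0) \<and> (\<Sum>i<n. (x i)\<^sup>2) = 1}"

definition tuples :: "nat \<Rightarrow> nat \<Rightarrow> nat list set" where
  "tuples n p = {is. length is = p \<and> set is \<subseteq> {..<n}}"

definition gauss :: "'i set \<Rightarrow> ('i \<Rightarrow> real) measure" where
  "gauss I = PiM I (\<lambda>_. density lborel std_normal_density)"

definition phi :: "nat \<Rightarrow> nat \<Rightarrow> (nat \<Rightarrow> (nat \<Rightarrow> real) set) \<Rightarrow> (nat list \<Rightarrow> real) \<Rightarrow> real" where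
  "phi p n S A = (SUP xs \<in> Pi\<^sub>E {..<p} S.
      \<Sum>is\<in>tuples n p. A is * (\<Prod>j<p. xs j (is ! j)))"

definition xi :: "nat \<Rightarrow> (nat \<Rightarrow> (nat \<Rightarrow> real) set) \<Rightarrow> nat \<Rightarrow> real \<Rightarrow> real" where
  "xi p S n c = 1 / sqrt n * (1 / c * ln (\<integral>A. exp (c * phi p n S A) \<partial>gauss (tuples n p)))"

text \<open>G (j,i) is the i-th entry of g^(j).\<close>
definition xi_u :: "nat \<Rightarrow> (nat \<Rightarrow> (nat \<Rightarrow> real) set) \<Rightarrow> nat \<Rightarrow> real \<Rightarrow> real" where
  "xi_u p S n c = 1 / sqrt n * (- c / 2 * (real p - 1) + 1 / c * ln
     (\<integral>G. exp (c * (SUP xs \<in> Pi\<^sub>E {..<p} S. \<Sum>j<p. \<Sum>i<n. G (j, i) * xs j i))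
      \<partial>gauss ({..<p} \<times> {..<n})))"

text \<open>B (j,is) is the entry A^(j)_is.\<close>
definition xi_l :: "nat \<Rightarrow> (nat \<Rightarrow> (nat \<Rightarrow> real) set) \<Rightarrow> nat \<Rightarrow> real \<Rightarrow> real" where
  "xi_l p S n c = 1 / sqrt n * (1 / c * ln
     (\<integral>B. exp (c / sqrt p * (SUP xs \<in> Pi\<^sub>E {..<p} S.
          \<Sum>j<p. \<Sum>is\<in>tuples n p. B (j, is) * (\<Prod>k<p. xs j (is ! k))))
      \<partial>gauss ({..<p} \<times> tuples n p)))"

end

theory Submission
  imports Defs
begin

text \<open>
  Both inequalities are instances of a Gordon-type comparison of centred Gaussian processes:
  if E[Y_s Y_t] <= E[X_s X_t] + a for all s, t, with equality for s = t, then
  exp(a/2) E exp(sup X) <= E exp(sup Y). For finitely many indices, X and Y are realised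
  independently, Z = sin(theta) X + cos(theta) Y interpolates between them, and Gaussian
  integration by parts shows that exp(a sin(theta)^2 / 2) E (sum_t exp(beta Z_t))^(1/beta)
  decreases on [0, pi/2]. Letting beta tend to infinity gives the maximum, and finite nets of the
  index set give the supremum.

  The tensor process sum_i A_i x1_(i_1) ... xp_(i_p) that defines phi has covariance
  prod_j <xj, yj>. Since sum_j a_j <= prod_j a_j + p - 1 whenever |a_j| <= 1, the process
  sum_j <g_j, xj> dominates it with a = c^2 (p - 1), which is the upper bound. For even p, AM-GM
  shows that the symmetric tensor processes, scaled by 1/sqrt p and with covariance
  sum_j <xj, yj>^p / p, dominate it with a = 0, which is the lower bound.
\<close>

section \<open>Gaussian integration by parts\<close>

abbreviation std_normal :: "real measure" where
  "std_normal \<equiv> density lborel std_normal_density"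

lemma exp_minus_square_tendsto_zero:
  fixes F :: "real filter"
  assumes "filterlim (\<lambda>y. y\<^sup>2) at_top F"
  shows "((\<lambda>y. exp (- y\<^sup>2 / 4)) \<longlongrightarrow> 0) F"
proof -
  have "filterlim (\<lambda>y. y\<^sup>2 / 4) at_top F"
    using filterlim_tendsto_pos_mult_at_top[OF tendsto_const _ assms, of "1/4"] by simp
  then have "filterlim (\<lambda>y. - y\<^sup>2 / 4) at_bot F"
    by (subst filterlim_uminus_at_bot) simp
  then show ?thesis by (rule filterlim_compose[OF exp_at_bot])
qed

lemma std_normal_density_mult_exp_le:
  "std_normal_density y * exp (K * \<bar>y\<bar>) \<le> exp (K\<^sup>2) * exp (- y\<^sup>2 / 4)"
proof -
  have "exp (K * \<bar>y\<bar> - y\<^sup>2 / 2) = exp (K * \<bar>y\<bar>) * exp (- y\<^sup>2 / 2)"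
    by (simp flip: exp_add)
  then have "std_normal_density y * exp (K * \<bar>y\<bar>) = exp (K * \<bar>y\<bar> - y\<^sup>2 / 2) / sqrt (2 * pi)"
    by (simp add: std_normal_density_def)
  also have "\<dots> \<le> exp (K * \<bar>y\<bar> - y\<^sup>2 / 2)"
    using pi_gt3 by (simp add: divide_le_eq mult_le_cancel_left1)
  also have "\<dots> \<le> exp (K\<^sup>2 - y\<^sup>2 / 4)"
    using zero_le_power2[of "K - \<bar>y\<bar> / 2"] by (simp add: power2_eq_square algebra_simps)
  also have "\<dots> = exp (K\<^sup>2) * exp (- y\<^sup>2 / 4)"
    by (simp flip: exp_add)
  finally show ?thesis .
qed

lemma integrable_exp_minus_square: "integrable lborel (\<lambda>y::real. exp (- y\<^sup>2 / 4))"
proof -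
  have "(\<lambda>y. exp (- y\<^sup>2 / 4)) = (\<lambda>y. sqrt (4 * pi) * normal_density 0 (sqrt 2) y)"
    by (auto simp: normal_density_def)
  then show ?thesis by (simp add: integrable_normal_density)
qed

lemma std_normal_density_mult_exp_growth_le:
  assumes g: "\<And>y. \<bar>g y\<bar> \<le> C * exp (K * \<bar>y\<bar>)"
  shows "\<bar>std_normal_density y * g y\<bar> \<le> C * exp (K\<^sup>2) * exp (- y\<^sup>2 / 4)"
proof -
  have "0 \<le> C" using g[of 0] by simp
  have "\<bar>std_normal_density y * g y\<bar> = std_normal_density y * \<bar>g y\<bar>"
    by (simp add: abs_mult normal_density_nonneg)
  also have "\<dots> \<le> C * (std_normal_density y * exp (K * \<bar>y\<bar>))"
    using mult_left_mono[OF g normal_density_nonneg] by (simp add: mult_ac)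
  also have "\<dots> \<le> C * (exp (K\<^sup>2) * exp (- y\<^sup>2 / 4))"
    using \<open>0 \<le> C\<close> by (intro mult_left_mono std_normal_density_mult_exp_le)
  finally show ?thesis by (simp add: mult_ac)
qed

lemma integrable_std_normal_exp_growth:
  assumes [measurable]: "g \<in> borel_measurable borel"
    and g: "\<And>y. \<bar>g y\<bar> \<le> C * exp (K * \<bar>y\<bar>)"
  shows "integrable lborel (\<lambda>y. std_normal_density y * g y)"
proof (rule Bochner_Integration.integrable_bound)
  show "integrable lborel (\<lambda>y. C * exp (K\<^sup>2) * exp (- y\<^sup>2 / 4))"
    using integrable_exp_minus_square by simp
  show "AE y in lborel. norm (std_normal_density y * g y) \<le> norm (C * exp (K\<^sup>2) * exp (- y\<^sup>2 / 4))"
    using std_normal_density_mult_exp_growth_le[OF g] by (intro AE_I2) (simp add: order_trans[OF _ abs_ge_self])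
qed simp

lemma std_normal_exp_growth_tendsto_zero:
  assumes g: "\<And>y. \<bar>g y\<bar> \<le> C * exp (K * \<bar>y\<bar>)"
  shows "((\<lambda>y. g y * std_normal_density y) \<longlongrightarrow> 0) at_top"
    and "((\<lambda>y. g y * std_normal_density y) \<longlongrightarrow> 0) at_bot"
proof -
  have bound: "\<forall>\<^sub>F y in F. norm (g y * std_normal_density y) \<le> C * exp (K\<^sup>2) * exp (- y\<^sup>2 / 4)" for F
    using std_normal_density_mult_exp_growth_le[OF g] by (simp add: mult.commute)
  show "((\<lambda>y. g y * std_normal_density y) \<longlongrightarrow> 0) at_top"
    by (rule Lim_null_comparison[OF bound tendsto_mult_right_zero[OF exp_minus_square_tendsto_zero]])
      (rule filterlim_pow_at_top[OF _ filterlim_ident], simp)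
  show "((\<lambda>y. g y * std_normal_density y) \<longlongrightarrow> 0) at_bot"
    by (rule Lim_null_comparison[OF bound tendsto_mult_right_zero[OF exp_minus_square_tendsto_zero]])
      (rule filterlim_pow_at_bot_even[OF _ filterlim_ident], simp_all)
qed

lemma abs_mult_exp_le_exp: "\<bar>y::real\<bar> * exp (K * \<bar>y\<bar>) \<le> exp ((K + 1) * \<bar>y\<bar>)"
proof -
  have "\<bar>y\<bar> \<le> exp \<bar>y\<bar>"
    using exp_ge_add_one_self[of "\<bar>y\<bar>"] by linarith
  then have "\<bar>y\<bar> * exp (K * \<bar>y\<bar>) \<le> exp \<bar>y\<bar> * exp (K * \<bar>y\<bar>)"
    by (intro mult_right_mono) auto
  then show ?thesis by (simp add: exp_add[symmetric] algebra_simps)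
qed

lemma std_normal_integration_by_parts:
  assumes deriv: "\<And>y. (g has_real_derivative g' y) (at y)"
    and cont: "\<And>y. isCont g' y"
    and g: "\<And>y. \<bar>g y\<bar> \<le> C * exp (K * \<bar>y\<bar>)"
    and g': "\<And>y. \<bar>g' y\<bar> \<le> C * exp (K * \<bar>y\<bar>)"
  shows "(\<integral>y. y * g y \<partial>std_normal) = (\<integral>y. g' y \<partial>std_normal)"
proof -
  \<comment> \<open>The density satisfies \<open>p' y = - y * p y\<close>, so this is integration by parts on the real
    line; the boundary terms vanish because \<open>g\<close> grows at most exponentially.\<close>
  let ?p = "std_normal_density"
  have "0 \<le> C" using g[of 0] by simp
  have dp: "(?p has_real_derivative (- y * ?p y)) (at y)" for y
    unfolding normal_density_def by (auto intro!: derivative_eq_intros simp: field_simps power2_eq_square)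
  have cont_g: "isCont g y" for y using deriv by (rule DERIV_isCont)
  have [measurable]: "g \<in> borel_measurable borel" "g' \<in> borel_measurable borel"
    using cont_g cont by (auto intro: borel_measurable_continuous_onI continuous_at_imp_continuous_on)
  have "\<bar>y * g y\<bar> \<le> C * exp ((K + 1) * \<bar>y\<bar>)" for y
  proof -
    have "\<bar>y * g y\<bar> \<le> \<bar>y\<bar> * (C * exp (K * \<bar>y\<bar>))"
      unfolding abs_mult by (intro mult_left_mono g) simp
    also have "\<dots> \<le> C * exp ((K + 1) * \<bar>y\<bar>)"
      using mult_left_mono[OF abs_mult_exp_le_exp \<open>0 \<le> C\<close>] by (simp add: mult_ac)
    finally show ?thesis .
  qed
  then have int_yg: "integrable lborel (\<lambda>y. ?p y * (y * g y))"
    by (intro integrable_std_normal_exp_growth) auto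
  have int_g': "integrable lborel (\<lambda>y. ?p y * g' y)"
    using g' by (intro integrable_std_normal_exp_growth) auto
  have "(LBINT y=-\<infinity>..\<infinity>. g' y * ?p y + g y * (- y * ?p y)) = 0 - 0"
  proof (rule interval_integral_FTC_integrable)
    show "((\<lambda>y. g y * ?p y) has_vector_derivative g' x * ?p x + g x * (- x * ?p x)) (at x)" for x
      using DERIV_mult[OF deriv dp]
      by (simp add: has_real_derivative_iff_has_vector_derivative algebra_simps)
    show "isCont (\<lambda>x. g' x * ?p x + g x * (- x * ?p x)) x" for x
      using cont cont_g DERIV_isCont[OF dp] by (intro continuous_intros) auto
    show "set_integrable lborel (einterval (- \<infinity>) \<infinity>) (\<lambda>x. g' x * ?p x + g x * (- x * ?p x))"
      unfolding set_integrable_def einterval_eq_UNIV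
      using Bochner_Integration.integrable_diff[OF int_g' int_yg] by (simp add: algebra_simps)
    show "(((\<lambda>y. g y * ?p y) \<circ> real_of_ereal) \<longlongrightarrow> 0) (at_right (- \<infinity>))"
      "(((\<lambda>y. g y * ?p y) \<circ> real_of_ereal) \<longlongrightarrow> 0) (at_left \<infinity>)"
      using std_normal_exp_growth_tendsto_zero[OF g] unfolding ereal_tendsto_simps by simp_all
  qed simp
  then have "(\<integral>y. ?p y * g' y - ?p y * (y * g y) \<partial>lborel) = 0"
    by (simp add: interval_lebesgue_integral_def einterval_eq_UNIV set_lebesgue_integral_def algebra_simps)
  then show ?thesis
    using int_yg int_g' by (subst (1 2) integral_density) (auto simp: normal_density_nonneg)
qed

lemma prob_space_std_normal: "prob_space std_normal"
  using prob_space_normal_density[of 1 0] by simp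

lemma prob_space_gauss: "prob_space (gauss I)"
  unfolding gauss_def by (intro prob_space_PiM prob_space_std_normal)

lemma integrable_gauss_exp_abs_sum:
  assumes "finite I"
  shows "integrable (gauss I) (\<lambda>w. exp (L * (\<Sum>i\<in>I. \<bar>w i\<bar>)))"
proof -
  interpret product_prob_space "\<lambda>_. std_normal" I
    by (intro product_prob_spaceI prob_space_std_normal)
  have "integrable std_normal (\<lambda>y. exp (L * \<bar>y\<bar>))"
    using integrable_std_normal_exp_growth[of "\<lambda>y. exp (L * \<bar>y\<bar>)" 1 L]
    by (subst integrable_density) (auto simp: normal_density_nonneg)
  then have "integrable (gauss I) (\<lambda>w. \<Prod>i\<in>I. exp (L * \<bar>w i\<bar>))"
    unfolding gauss_def by (intro product_integrable_prod assms)
  then show ?thesis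
    by (simp add: sum_distrib_left exp_sum[OF assms])
qed

lemma integrable_gauss_exp_growth:
  assumes "finite I" and [measurable]: "f \<in> borel_measurable (gauss I)"
    and f: "\<And>w. \<bar>f w\<bar> \<le> C * exp (L * (\<Sum>i\<in>I. \<bar>w i\<bar>))"
  shows "integrable (gauss I) f"
proof (rule Bochner_Integration.integrable_bound)
  show "integrable (gauss I) (\<lambda>w. C * exp (L * (\<Sum>i\<in>I. \<bar>w i\<bar>)))"
    using integrable_gauss_exp_abs_sum[OF assms(1)] by simp
  show "AE w in gauss I. norm (f w) \<le> norm (C * exp (L * (\<Sum>i\<in>I. \<bar>w i\<bar>)))"
    using f by (intro AE_I2) (simp add: order_trans[OF _ abs_ge_self])
qed simp

lemma integrable_gauss_coordinate_mult:
  assumes I: "finite I" "k \<in> I" and [measurable]: "h \<in> borel_measurable (gauss I)"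
    and h: "\<And>w. \<bar>h w\<bar> \<le> C * exp (L * (\<Sum>i\<in>I. \<bar>w i\<bar>))"
  shows "integrable (gauss I) (\<lambda>w. w k * h w)"
proof (rule integrable_gauss_exp_growth[OF I(1)])
  have "0 \<le> C" using h[of undefined] by (metis abs_ge_zero exp_gt_zero order_trans zero_le_mult_iff not_le)
  fix w :: "'a \<Rightarrow> real"
  have "\<bar>w k\<bar> \<le> (\<Sum>i\<in>I. \<bar>w i\<bar>)" using I by (intro member_le_sum) auto
  then have "\<bar>w k * h w\<bar> \<le> (\<Sum>i\<in>I. \<bar>w i\<bar>) * (C * exp (L * (\<Sum>i\<in>I. \<bar>w i\<bar>)))"
    unfolding abs_mult by (intro mult_mono h) auto
  also have "\<dots> \<le> C * exp ((L + 1) * (\<Sum>i\<in>I. \<bar>w i\<bar>))"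
    using mult_left_mono[OF abs_mult_exp_le_exp[of "\<Sum>i\<in>I. \<bar>w i\<bar>" L] \<open>0 \<le> C\<close>]
    by (simp add: sum_nonneg mult_ac)
  finally show "\<bar>w k * h w\<bar> \<le> C * exp ((L + 1) * (\<Sum>i\<in>I. \<bar>w i\<bar>))" .
  have [measurable]: "(\<lambda>w. w k) \<in> borel_measurable (gauss I)"
    unfolding gauss_def using I by measurable
  show "(\<lambda>w. w k * h w) \<in> borel_measurable (gauss I)" by measurable
qed

lemma gauss_integration_by_parts:
  assumes I: "finite I" "k \<in> I"
    and meas: "h \<in> borel_measurable (gauss I)" "h' \<in> borel_measurable (gauss I)"
    and deriv: "\<And>w y. ((\<lambda>y. h (w(k := y))) has_real_derivative h' (w(k := y))) (at y)"
    and cont: "\<And>w y. isCont (\<lambda>y. h' (w(k := y))) y"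
    and h: "\<And>w. \<bar>h w\<bar> \<le> C * exp (L * (\<Sum>i\<in>I. \<bar>w i\<bar>))"
    and h': "\<And>w. \<bar>h' w\<bar> \<le> C * exp (L * (\<Sum>i\<in>I. \<bar>w i\<bar>))"
  shows "(\<integral>w. w k * h w \<partial>gauss I) = (\<integral>w. h' w \<partial>gauss I)"
proof -
  interpret product_prob_space "\<lambda>_. std_normal" I
    by (intro product_prob_spaceI prob_space_std_normal)
  define I' where "I' = I - {k}"
  have I': "I = insert k I'" "k \<notin> I'" "finite I'" using I by (auto simp: I'_def)
  have off_k: "(\<Sum>i\<in>I'. \<bar>(w(k := y)) i\<bar>) = (\<Sum>i\<in>I'. \<bar>w i\<bar>)" for w y
    using I'(2) by (intro sum.cong) auto
  have split: "(\<Sum>i\<in>I. \<bar>(w(k := y)) i\<bar>) = \<bar>y\<bar> + (\<Sum>i\<in>I'. \<bar>w i\<bar>)" for w y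
    by (simp only: I'(1) sum.insert[OF I'(3,2)] fun_upd_same off_k)
  have "(\<integral>w. w k * h w \<partial>gauss I)
      = (\<integral>x. (\<integral>y. y * h (x(k := y)) \<partial>std_normal) \<partial>Pi\<^sub>M I' (\<lambda>_. std_normal))"
    using integrable_gauss_coordinate_mult[OF I meas(1) h] product_integral_insert[OF I'(3,2), of "\<lambda>w. w k * h w"]
    unfolding gauss_def I'(1) by simp
  also have "\<dots> = (\<integral>x. (\<integral>y. h' (x(k := y)) \<partial>std_normal) \<partial>Pi\<^sub>M I' (\<lambda>_. std_normal))"
  proof (rule Bochner_Integration.integral_cong[OF refl])
    fix x :: "'a \<Rightarrow> real"
    have "\<bar>h (x(k := y))\<bar> \<le> C * exp (L * (\<Sum>i\<in>I'. \<bar>x i\<bar>)) * exp (L * \<bar>y\<bar>)"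
      "\<bar>h' (x(k := y))\<bar> \<le> C * exp (L * (\<Sum>i\<in>I'. \<bar>x i\<bar>)) * exp (L * \<bar>y\<bar>)" for y
      using h[of "x(k := y)"] h'[of "x(k := y)"] unfolding split
      by (simp_all add: distrib_left exp_add mult_ac)
    then show "(\<integral>y. y * h (x(k := y)) \<partial>std_normal) = (\<integral>y. h' (x(k := y)) \<partial>std_normal)"
      by (intro std_normal_integration_by_parts deriv cont)
  qed
  also have "\<dots> = (\<integral>w. h' w \<partial>gauss I)"
    using integrable_gauss_exp_growth[OF I(1) meas(2) h'] product_integral_insert[OF I'(3,2), of h']
    unfolding gauss_def I'(1) by simp
  finally show ?thesis .
qed

lemma integral_gauss_reindex:
  fixes h :: "('i \<Rightarrow> real) \<Rightarrow> real"
  assumes f: "inj_on f I" "f \<in> I \<rightarrow> K" and [measurable]: "h \<in> borel_measurable (gauss I)"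
  shows "(\<integral>w. h (\<lambda>i\<in>I. w (f i)) \<partial>gauss K) = (\<integral>x. h x \<partial>gauss I)"
proof -
  have [measurable]: "(\<lambda>w. \<lambda>i\<in>I. w (f i)) \<in> gauss K \<rightarrow>\<^sub>M gauss I"
    unfolding gauss_def using f(2) by (intro measurable_restrict measurable_component_singleton) auto
  have "distr (gauss K) (gauss I) (\<lambda>w. \<lambda>i\<in>I. w (f i)) = gauss I"
    using distr_PiM_reindex[OF _ f, of "\<lambda>_. std_normal"] prob_space_std_normal
    unfolding gauss_def by simp
  then show ?thesis
    using integral_distr[of "\<lambda>w. \<lambda>i\<in>I. w (f i)" "gauss K" "gauss I" h] by simp
qed

section \<open>Functions of exponential growth\<close>

text \<open>The bound is uniform in the parameter \<open>\<theta>\<close>, so that families of such functions can also be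
  integrated over \<open>\<theta>\<close>.\<close>

definition exp_growth :: "'k set \<Rightarrow> ('p \<Rightarrow> ('k \<Rightarrow> real) \<Rightarrow> real) \<Rightarrow> bool" where
  "exp_growth K f \<longleftrightarrow>
     (\<exists>C L. 0 \<le> C \<and> 0 \<le> L \<and> (\<forall>\<theta> w. \<bar>f \<theta> w\<bar> \<le> C * exp (L * (\<Sum>k\<in>K. \<bar>w k\<bar>))))"

lemma exp_growthI:
  "0 \<le> C \<Longrightarrow> 0 \<le> L \<Longrightarrow> (\<And>\<theta> w. \<bar>f \<theta> w\<bar> \<le> C * exp (L * (\<Sum>k\<in>K. \<bar>w k\<bar>))) \<Longrightarrow> exp_growth K f"
  unfolding exp_growth_def by blast

lemma exp_growth_bounded: "(\<And>\<theta> w. \<bar>f \<theta> w\<bar> \<le> c) \<Longrightarrow> exp_growth K f"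
  by (rule exp_growthI[of "\<bar>c\<bar>" 0]) (auto intro: order_trans[OF _ abs_ge_self])

lemma exp_growth_const: "exp_growth K (\<lambda>\<theta> w. c)"
  by (rule exp_growth_bounded[of _ "\<bar>c\<bar>"]) simp

lemma exp_growth_sin: "exp_growth K (\<lambda>\<theta> w. sin \<theta>)"
  by (rule exp_growth_bounded[of _ 1]) simp

lemma exp_growth_cos: "exp_growth K (\<lambda>\<theta> w. cos \<theta>)"
  by (rule exp_growth_bounded[of _ 1]) simp

lemma exp_growth_le: "exp_growth K g \<Longrightarrow> (\<And>\<theta> w. \<bar>f \<theta> w\<bar> \<le> \<bar>g \<theta> w\<bar>) \<Longrightarrow> exp_growth K f"
  unfolding exp_growth_def by (meson order_trans)

lemma exp_growth_add:
  fixes K :: "'k set"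
  assumes "exp_growth K f" "exp_growth K g"
  shows "exp_growth K (\<lambda>\<theta> w. f \<theta> w + g \<theta> w)"
proof -
  obtain C1 L1 C2 L2 where "0 \<le> C1" "0 \<le> L1" "0 \<le> C2" "0 \<le> L2"
    and f: "\<And>\<theta> w. \<bar>f \<theta> w\<bar> \<le> C1 * exp (L1 * (\<Sum>k\<in>K. \<bar>w k\<bar>))"
    and g: "\<And>\<theta> w. \<bar>g \<theta> w\<bar> \<le> C2 * exp (L2 * (\<Sum>k\<in>K. \<bar>w k\<bar>))"
    using assms unfolding exp_growth_def by blast
  show ?thesis
  proof (rule exp_growthI[of "C1 + C2" "max L1 L2"])
    fix \<theta> and w :: "'k \<Rightarrow> real"
    let ?N = "\<Sum>k\<in>K. \<bar>w k\<bar>"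
    have N: "0 \<le> ?N" by (simp add: sum_nonneg)
    have "\<bar>f \<theta> w + g \<theta> w\<bar> \<le> C1 * exp (L1 * ?N) + C2 * exp (L2 * ?N)"
      using f[of \<theta> w] g[of \<theta> w] by linarith
    also have "\<dots> \<le> C1 * exp (max L1 L2 * ?N) + C2 * exp (max L1 L2 * ?N)"
      using \<open>0 \<le> C1\<close> \<open>0 \<le> C2\<close> N by (intro add_mono mult_left_mono) (auto intro: mult_right_mono)
    finally show "\<bar>f \<theta> w + g \<theta> w\<bar> \<le> (C1 + C2) * exp (max L1 L2 * ?N)"
      by (simp add: algebra_simps)
  qed (use \<open>0 \<le> C1\<close> \<open>0 \<le> C2\<close> \<open>0 \<le> L1\<close> in auto)
qed

lemma exp_growth_mult:
  fixes K :: "'k set"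
  assumes "exp_growth K f" "exp_growth K g"
  shows "exp_growth K (\<lambda>\<theta> w. f \<theta> w * g \<theta> w)"
proof -
  obtain C1 L1 C2 L2 where "0 \<le> C1" "0 \<le> L1" "0 \<le> C2" "0 \<le> L2"
    and f: "\<And>\<theta> w. \<bar>f \<theta> w\<bar> \<le> C1 * exp (L1 * (\<Sum>k\<in>K. \<bar>w k\<bar>))"
    and g: "\<And>\<theta> w. \<bar>g \<theta> w\<bar> \<le> C2 * exp (L2 * (\<Sum>k\<in>K. \<bar>w k\<bar>))"
    using assms unfolding exp_growth_def by blast
  show ?thesis
  proof (rule exp_growthI[of "C1 * C2" "L1 + L2"])
    fix \<theta> and w :: "'k \<Rightarrow> real"
    have "\<bar>f \<theta> w * g \<theta> w\<bar> \<le> (C1 * exp (L1 * (\<Sum>k\<in>K. \<bar>w k\<bar>))) * (C2 * exp (L2 * (\<Sum>k\<in>K. \<bar>w k\<bar>)))"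
      unfolding abs_mult using f g \<open>0 \<le> C1\<close> by (intro mult_mono) auto
    then show "\<bar>f \<theta> w * g \<theta> w\<bar> \<le> (C1 * C2) * exp ((L1 + L2) * (\<Sum>k\<in>K. \<bar>w k\<bar>))"
      by (simp add: algebra_simps exp_add)
  qed (use \<open>0 \<le> C1\<close> \<open>0 \<le> C2\<close> \<open>0 \<le> L1\<close> \<open>0 \<le> L2\<close> in auto)
qed

lemma exp_growth_diff:
  "exp_growth K f \<Longrightarrow> exp_growth K g \<Longrightarrow> exp_growth K (\<lambda>\<theta> w. f \<theta> w - g \<theta> w)"
  using exp_growth_add[of K f "\<lambda>\<theta> w. - g \<theta> w"] unfolding exp_growth_def by auto

lemma exp_growth_sum:
  "(\<And>t. t \<in> T \<Longrightarrow> exp_growth K (f t)) \<Longrightarrow> exp_growth K (\<lambda>\<theta> w. \<Sum>t\<in>T. f t \<theta> w)"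
  by (induction T rule: infinite_finite_induct) (auto intro: exp_growth_add exp_growth_bounded)

lemma exp_growth_coordinate:
  assumes "finite K" "k \<in> K"
  shows "exp_growth K (\<lambda>\<theta> w. w k)"
proof (rule exp_growthI[of 1 1])
  fix \<theta> and w :: "'a \<Rightarrow> real"
  have "\<bar>w k\<bar> \<le> (\<Sum>k\<in>K. \<bar>w k\<bar>)" using assms by (intro member_le_sum) auto
  also have "\<dots> \<le> exp (\<Sum>k\<in>K. \<bar>w k\<bar>)" using exp_ge_add_one_self[of "\<Sum>k\<in>K. \<bar>w k\<bar>"] by linarith
  finally show "\<bar>w k\<bar> \<le> 1 * exp (1 * (\<Sum>k\<in>K. \<bar>w k\<bar>))" by simp
qed auto

lemma exp_growth_exp:
  "0 \<le> L \<Longrightarrow> (\<And>\<theta> w. g \<theta> w \<le> L * (\<Sum>k\<in>K. \<bar>w k\<bar>)) \<Longrightarrow> exp_growth K (\<lambda>\<theta> w. exp (g \<theta> w))"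
  by (rule exp_growthI[of 1 L]) auto

lemma exp_growth_powr_sum_exp:
  fixes K :: "'k set"
  assumes T: "finite T" "T \<noteq> {}" and "0 \<le> L"
    and g: "\<And>t \<theta> w. t \<in> T \<Longrightarrow> \<bar>g t \<theta> w\<bar> \<le> L * (\<Sum>k\<in>K. \<bar>w k\<bar>)"
  shows "exp_growth K (\<lambda>\<theta> w. (\<Sum>t\<in>T. exp (g t \<theta> w)) powr r)"
proof -
  obtain t0 where t0: "t0 \<in> T" using T by auto
  define N where "N w = (\<Sum>k\<in>K. \<bar>w k\<bar>)" for w :: "'k \<Rightarrow> real"
  have "(\<Sum>t\<in>T. exp (g t \<theta> w)) powr r \<le> real (card T) powr \<bar>r\<bar> * exp (\<bar>r\<bar> * L * N w)" for \<theta> w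
  proof -
    let ?S = "\<Sum>t\<in>T. exp (g t \<theta> w)"
    have "exp (- L * N w) \<le> exp (g t0 \<theta> w)"
      using g[OF t0, of \<theta> w] unfolding N_def by (simp add: abs_le_iff)
    also have "\<dots> \<le> ?S"
      using T(1) t0 by (intro member_le_sum) auto
    finally have lower: "exp (- L * N w) \<le> ?S" .
    have upper: "?S \<le> real (card T) * exp (L * N w)"
      using g unfolding N_def by (intro sum_bounded_above[of T, simplified]) (simp add: abs_le_iff)
    show ?thesis
    proof (cases "0 \<le> r")
      case True
      have "?S powr r \<le> (real (card T) * exp (L * N w)) powr r"
        using upper lower True by (intro powr_mono2) (auto intro: order_trans[OF less_imp_le[OF exp_gt_zero]])
      also have "\<dots> = real (card T) powr r * exp (r * L * N w)"
        using T by (simp add: powr_def ln_mult exp_add[symmetric] algebra_simps card_gt_0_iff)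
      finally show ?thesis using True by simp
    next
      case False
      have "?S powr r \<le> exp (- L * N w) powr r"
        using lower False by (intro powr_mono2') auto
      also have "\<dots> = exp (\<bar>r\<bar> * L * N w)" using False by (simp add: powr_def)
      also have "\<dots> \<le> real (card T) powr \<bar>r\<bar> * exp (\<bar>r\<bar> * L * N w)"
        using T by (simp add: card_gt_0_iff Suc_le_eq ge_one_powr_ge_zero)
      finally show ?thesis .
    qed
  qed
  then show ?thesis
    using \<open>0 \<le> L\<close> unfolding N_def
    by (intro exp_growthI[of "real (card T) powr \<bar>r\<bar>" "\<bar>r\<bar> * L"]) auto
qed

lemma integrable_exp_growth:
  assumes "finite K" "exp_growth K f" "f \<theta> \<in> borel_measurable (gauss K)"
  shows "integrable (gauss K) (f \<theta>)"
proof -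
  obtain C L where "\<And>w. \<bar>f \<theta> w\<bar> \<le> C * exp (L * (\<Sum>k\<in>K. \<bar>w k\<bar>))"
    using assms(2) unfolding exp_growth_def by blast
  then show ?thesis by (rule integrable_gauss_exp_growth[OF assms(1,3)])
qed

lemma exp_growth_integration_by_parts:
  assumes "finite K" "k \<in> K" and growth: "exp_growth K h" "exp_growth K h'"
    and "h \<theta> \<in> borel_measurable (gauss K)" "h' \<theta> \<in> borel_measurable (gauss K)"
    and "\<And>w y. ((\<lambda>y. h \<theta> (w(k := y))) has_real_derivative h' \<theta> (w(k := y))) (at y)"
    and "\<And>w y. isCont (\<lambda>y. h' \<theta> (w(k := y))) y"
  shows "(\<integral>w. w k * h \<theta> w \<partial>gauss K) = (\<integral>w. h' \<theta> w \<partial>gauss K)"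
proof -
  have "exp_growth K (\<lambda>\<theta> w. \<bar>h \<theta> w\<bar> + \<bar>h' \<theta> w\<bar>)"
    using growth by (intro exp_growth_add) (auto elim: exp_growth_le)
  then obtain C L where CL: "\<And>w. \<bar>h \<theta> w\<bar> + \<bar>h' \<theta> w\<bar> \<le> C * exp (L * (\<Sum>k\<in>K. \<bar>w k\<bar>))"
    unfolding exp_growth_def by fastforce
  have "\<bar>h \<theta> w\<bar> \<le> C * exp (L * (\<Sum>k\<in>K. \<bar>w k\<bar>))" "\<bar>h' \<theta> w\<bar> \<le> C * exp (L * (\<Sum>k\<in>K. \<bar>w k\<bar>))" for w
    using CL[of w] by linarith+
  then show ?thesis
    using assms by (intro gauss_integration_by_parts[where C = C and L = L])
qed

lemma integrable_exp_growth_interval: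
  fixes f :: "real \<Rightarrow> ('k \<Rightarrow> real) \<Rightarrow> real" and a b :: real
  assumes "finite K" "exp_growth K f"
    and [measurable]: "(\<lambda>(w, \<theta>). f \<theta> w) \<in> borel_measurable (gauss K \<Otimes>\<^sub>M lborel)"
  shows "integrable (gauss K \<Otimes>\<^sub>M lborel) (\<lambda>(w, \<theta>). indicator {a..b} \<theta> * f \<theta> w)"
proof -
  interpret pair_sigma_finite "gauss K" lborel
    by (simp add: pair_sigma_finite_def prob_space_imp_sigma_finite prob_space_gauss lborel.sigma_finite_measure_axioms)
  obtain C L where f: "\<And>\<theta> w. \<bar>f \<theta> w\<bar> \<le> C * exp (L * (\<Sum>k\<in>K. \<bar>w k\<bar>))"
    using assms(2) unfolding exp_growth_def by blast
  have [simp]: "integrable lborel (indicator {a..b} :: real \<Rightarrow> real)"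
    using borel_integrable_atLeastAtMost'[of a b "\<lambda>_. 1 :: real"] unfolding set_integrable_def by simp
  have [measurable]: "(\<lambda>w. \<Sum>k\<in>K. \<bar>w k\<bar>) \<in> borel_measurable (gauss K)"
    unfolding gauss_def using assms(1) by measurable
  have "integrable (gauss K \<Otimes>\<^sub>M lborel) (\<lambda>(w, \<theta>). C * exp (L * (\<Sum>k\<in>K. \<bar>w k\<bar>)) * indicator {a..b} \<theta>)"
  proof (rule Fubini_integrable)
    show "integrable (gauss K) (\<lambda>w. \<integral>\<theta>. norm (case (w, \<theta>) of (w, \<theta>) \<Rightarrow>
        C * exp (L * (\<Sum>k\<in>K. \<bar>w k\<bar>)) * indicator {a..b} \<theta>) \<partial>lborel)"
      using integrable_gauss_exp_abs_sum[OF assms(1), of L]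
      by (simp add: abs_mult)
  qed (auto simp: abs_mult, measurable)
  then show ?thesis
  proof (rule Bochner_Integration.integrable_bound)
    show "AE x in gauss K \<Otimes>\<^sub>M lborel. norm (case x of (w, \<theta>) \<Rightarrow> indicator {a..b} \<theta> * f \<theta> w)
        \<le> norm (case x of (w, \<theta>) \<Rightarrow> C * exp (L * (\<Sum>k\<in>K. \<bar>w k\<bar>)) * indicator {a..b} \<theta>)"
      using f by (intro AE_I2) (auto simp: indicator_def abs_mult intro: order_trans[OF _ abs_ge_self])
  qed measurable
qed

section \<open>Interpolation between two Gaussian processes\<close>

lemma has_real_derivative_powr_sum_exp:
  assumes "finite T" "T \<noteq> {}" and z: "\<And>s. s \<in> T \<Longrightarrow> (z s has_real_derivative c s) (at r)"
  shows "((\<lambda>r. (\<Sum>s\<in>T. exp (\<beta> * z s r)) powr p) has_real_derivative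
      p * (\<Sum>s\<in>T. exp (\<beta> * z s r)) powr (p - 1) * (\<Sum>s\<in>T. \<beta> * c s * exp (\<beta> * z s r))) (at r)"
proof -
  have "((\<lambda>r. \<Sum>s\<in>T. exp (\<beta> * z s r)) has_real_derivative (\<Sum>s\<in>T. \<beta> * c s * exp (\<beta> * z s r))) (at r)"
    using z by (intro DERIV_sum) (auto intro!: derivative_eq_intros)
  moreover have "0 < (\<Sum>s\<in>T. exp (\<beta> * z s r))" using assms(1,2) by (intro sum_pos) auto
  ultimately show ?thesis by (auto dest: DERIV_fun_powr[of _ _ _ p] simp: mult_ac)
qed

lemma has_real_derivative_powr_sum_exp_mult_exp:
  assumes "finite T" "T \<noteq> {}" "t \<in> T" and z: "\<And>s. s \<in> T \<Longrightarrow> (z s has_real_derivative c s) (at r)"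
  shows "((\<lambda>r. (\<Sum>s\<in>T. exp (\<beta> * z s r)) powr p * exp (\<beta> * z t r)) has_real_derivative
      p * (\<Sum>s\<in>T. exp (\<beta> * z s r)) powr (p - 1) * (\<Sum>s\<in>T. \<beta> * c s * exp (\<beta> * z s r)) * exp (\<beta> * z t r)
      + (\<Sum>s\<in>T. exp (\<beta> * z s r)) powr p * (\<beta> * c t * exp (\<beta> * z t r))) (at r)"
proof -
  have "((\<lambda>r. exp (\<beta> * z t r)) has_real_derivative \<beta> * c t * exp (\<beta> * z t r)) (at r)"
    using z[OF assms(3)] by (auto intro!: derivative_eq_intros)
  from DERIV_mult[OF has_real_derivative_powr_sum_exp[OF assms(1,2) z] this] show ?thesis
    by (simp add: mult_ac)
qed

text \<open>\<open>Z \<theta> w t\<close> is the interpolation sin(theta) X_t + cos(theta) Y_t between the Gaussian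
  processes X_t = sum_k w_k u_tk and Y_t = sum_k w_k v_tk, which are independent because \<open>u\<close> and
  \<open>v\<close> have disjoint supports. \<open>H \<theta> w t\<close> is the derivative of the soft maximum S^(1/beta) with
  respect to Z_t, and \<open>dH \<theta> w t c\<close> is the derivative of \<open>H \<theta> w t\<close> when \<open>Z\<close> moves with
  velocity \<open>c\<close>.\<close>

locale gauss_interpolation =
  fixes K :: "'k set" and T :: "'t set" and u v :: "'t \<Rightarrow> 'k \<Rightarrow> real" and \<beta> :: real
  assumes finite_K: "finite K" and finite_T: "finite T" and T_nonempty: "T \<noteq> {}"
    and beta_gt_1: "1 < \<beta>"
    and disjoint_support: "\<And>s t k. u s k * v t k = 0"
begin

definition coef :: "real \<Rightarrow> 't \<Rightarrow> 'k \<Rightarrow> real" where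
  "coef \<theta> t k = sin \<theta> * u t k + cos \<theta> * v t k"

definition Z :: "real \<Rightarrow> ('k \<Rightarrow> real) \<Rightarrow> 't \<Rightarrow> real" where
  "Z \<theta> w t = (\<Sum>k\<in>K. w k * coef \<theta> t k)"

definition S :: "real \<Rightarrow> ('k \<Rightarrow> real) \<Rightarrow> real" where
  "S \<theta> w = (\<Sum>t\<in>T. exp (\<beta> * Z \<theta> w t))"

definition H :: "real \<Rightarrow> ('k \<Rightarrow> real) \<Rightarrow> 't \<Rightarrow> real" where
  "H \<theta> w t = S \<theta> w powr (1/\<beta> - 1) * exp (\<beta> * Z \<theta> w t)"

definition dH :: "real \<Rightarrow> ('k \<Rightarrow> real) \<Rightarrow> 't \<Rightarrow> ('t \<Rightarrow> real) \<Rightarrow> real" where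
  "dH \<theta> w t c = (1/\<beta> - 1) * S \<theta> w powr (1/\<beta> - 1 - 1) * (\<Sum>s\<in>T. \<beta> * c s * exp (\<beta> * Z \<theta> w s))
       * exp (\<beta> * Z \<theta> w t) + S \<theta> w powr (1/\<beta> - 1) * (\<beta> * c t * exp (\<beta> * Z \<theta> w t))"

definition coef_bound :: real where
  "coef_bound = (\<Sum>t\<in>T. \<Sum>k\<in>K. \<bar>u t k\<bar> + \<bar>v t k\<bar>)"

lemma S_pos: "0 < S \<theta> w"
  unfolding S_def using finite_T T_nonempty by (intro sum_pos) auto

lemma S_neq_0: "S \<theta> w \<noteq> 0"
  using S_pos[of \<theta> w] by simp

lemma abs_coef_le: "t \<in> T \<Longrightarrow> k \<in> K \<Longrightarrow> \<bar>coef \<theta> t k\<bar> \<le> coef_bound"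
proof -
  assume "t \<in> T" "k \<in> K"
  have "\<bar>coef \<theta> t k\<bar> \<le> \<bar>sin \<theta>\<bar> * \<bar>u t k\<bar> + \<bar>cos \<theta>\<bar> * \<bar>v t k\<bar>"
    unfolding coef_def abs_mult[symmetric] by (rule abs_triangle_ineq)
  also have "\<dots> \<le> \<bar>u t k\<bar> + \<bar>v t k\<bar>"
    by (intro add_mono mult_left_le_one_le) auto
  also have "\<dots> \<le> (\<Sum>k\<in>K. \<bar>u t k\<bar> + \<bar>v t k\<bar>)"
    using \<open>k \<in> K\<close> finite_K by (intro member_le_sum) auto
  also have "\<dots> \<le> coef_bound"
    unfolding coef_bound_def using \<open>t \<in> T\<close> finite_T by (intro member_le_sum sum_nonneg) auto
  finally show ?thesis .
qed

lemma coef_bound_nonneg: "0 \<le> coef_bound"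
  unfolding coef_bound_def by (intro sum_nonneg) auto

lemma abs_Z_le: "t \<in> T \<Longrightarrow> \<bar>Z \<theta> w t\<bar> \<le> coef_bound * (\<Sum>k\<in>K. \<bar>w k\<bar>)"
proof -
  assume "t \<in> T"
  have "\<bar>Z \<theta> w t\<bar> \<le> (\<Sum>k\<in>K. \<bar>w k\<bar> * coef_bound)"
    unfolding Z_def using abs_coef_le[OF \<open>t \<in> T\<close>]
    by (intro order_trans[OF sum_abs] sum_mono) (simp add: abs_mult mult_left_mono)
  then show ?thesis by (metis sum_distrib_right mult.commute)
qed

lemma Z_fun_upd: "k \<in> K \<Longrightarrow> Z \<theta> (w(k := y)) t = Z \<theta> w t + (y - w k) * coef \<theta> t k"
  unfolding Z_def using finite_K
  by (simp add: sum.remove[of K k] sum.cong[of "K - {k}" "K - {k}" "\<lambda>i. (w(k := y)) i * coef \<theta> t i"] algebra_simps)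

lemma measurable_Z [measurable]: "(\<lambda>w. Z \<theta> w t) \<in> borel_measurable (gauss K)"
  unfolding Z_def gauss_def by measurable

lemma measurable_Z_pair [measurable]: "(\<lambda>(w, \<theta>). Z \<theta> w t) \<in> borel_measurable (gauss K \<Otimes>\<^sub>M lborel)"
  unfolding Z_def coef_def gauss_def by measurable

lemma measurable_S [measurable]: "S \<theta> \<in> borel_measurable (gauss K)"
  unfolding S_def by measurable

lemma measurable_S_pair [measurable]: "(\<lambda>(w, \<theta>). S \<theta> w) \<in> borel_measurable (gauss K \<Otimes>\<^sub>M lborel)"
  unfolding S_def by measurable

lemma measurable_H [measurable]: "(\<lambda>w. H \<theta> w t) \<in> borel_measurable (gauss K)"
  unfolding H_def by measurable

lemma measurable_dH [measurable]: "(\<lambda>w. dH \<theta> w t c) \<in> borel_measurable (gauss K)"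
  unfolding dH_def by measurable

lemma abs_beta_Z_le: "t \<in> T \<Longrightarrow> \<bar>\<beta> * Z \<theta> w t\<bar> \<le> \<beta> * coef_bound * (\<Sum>k\<in>K. \<bar>w k\<bar>)"
  using mult_left_mono[OF abs_Z_le, of t \<beta>] beta_gt_1 by (simp add: abs_mult mult.assoc)

lemma exp_growth_S_powr: "exp_growth K (\<lambda>\<theta> w. S \<theta> w powr p)"
  unfolding S_def
  by (rule exp_growth_powr_sum_exp[OF finite_T T_nonempty _ abs_beta_Z_le])
    (use coef_bound_nonneg beta_gt_1 in simp_all)

lemma exp_growth_exp_Z: "t \<in> T \<Longrightarrow> exp_growth K (\<lambda>\<theta> w. exp (\<beta> * Z \<theta> w t))"
  by (rule exp_growth_exp[OF _ order_trans[OF abs_ge_self abs_beta_Z_le]])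
    (use coef_bound_nonneg beta_gt_1 in simp_all)

lemma exp_growth_H: "t \<in> T \<Longrightarrow> exp_growth K (\<lambda>\<theta> w. H \<theta> w t)"
  unfolding H_def by (intro exp_growth_mult exp_growth_S_powr exp_growth_exp_Z)

lemma exp_growth_dH:
  "t \<in> T \<Longrightarrow> (\<And>\<theta> s. s \<in> T \<Longrightarrow> \<bar>c \<theta> s\<bar> \<le> M) \<Longrightarrow> exp_growth K (\<lambda>\<theta> w. dH \<theta> w t (c \<theta>))"
  unfolding dH_def
  by (intro exp_growth_add exp_growth_mult exp_growth_sum exp_growth_S_powr exp_growth_exp_Z
      exp_growth_const) (auto intro: exp_growth_bounded)

lemma integral_coordinate_mult_H:
  assumes "t \<in> T" "k \<in> K"
  shows "(\<integral>w. w k * H \<theta> w t \<partial>gauss K) = (\<integral>w. dH \<theta> w t (\<lambda>s. coef \<theta> s k) \<partial>gauss K)"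
proof (rule exp_growth_integration_by_parts[OF finite_K \<open>k \<in> K\<close> exp_growth_H[OF \<open>t \<in> T\<close>]])
  show "exp_growth K (\<lambda>\<theta> w. dH \<theta> w t (\<lambda>s. coef \<theta> s k))"
    using abs_coef_le \<open>k \<in> K\<close> by (intro exp_growth_dH[OF \<open>t \<in> T\<close>])
  fix w :: "'k \<Rightarrow> real" and y :: real
  let ?z = "\<lambda>s y. Z \<theta> w s + (y - w k) * coef \<theta> s k"
  have z: "(?z s has_real_derivative coef \<theta> s k) (at y)" for s
    by (auto intro!: derivative_eq_intros)
  have "((\<lambda>y. H \<theta> (w(k := y)) t) has_real_derivative dH \<theta> (w(k := y)) t (\<lambda>s. coef \<theta> s k)) (at y)"
    using has_real_derivative_powr_sum_exp_mult_exp[OF finite_T T_nonempty \<open>t \<in> T\<close> z, where \<beta> = \<beta> and p = "1/\<beta> - 1"]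
    unfolding H_def dH_def S_def Z_fun_upd[OF \<open>k \<in> K\<close>] .
  then show "((\<lambda>y. H \<theta> (w(k := y)) t) has_real_derivative dH \<theta> (w(k := y)) t (\<lambda>s. coef \<theta> s k)) (at y)" .
  have "(\<Sum>s\<in>T. exp (\<beta> * ?z s y)) \<noteq> 0" for y
    using S_pos[of \<theta> "w(k := y)"] unfolding S_def Z_fun_upd[OF \<open>k \<in> K\<close>] by simp
  then show "isCont (\<lambda>y. dH \<theta> (w(k := y)) t (\<lambda>s. coef \<theta> s k)) y"
    unfolding dH_def S_def Z_fun_upd[OF \<open>k \<in> K\<close>] by (intro continuous_intros)
qed (rule measurable_H, rule measurable_dH)

end

lemma integral_mult_add_double_sum:
  fixes f :: "'a \<Rightarrow> real" and g :: "'t \<Rightarrow> 'k \<Rightarrow> 'a \<Rightarrow> real"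
  assumes "integrable M f" "\<And>t k. t \<in> T \<Longrightarrow> k \<in> K \<Longrightarrow> integrable M (g t k)"
  shows "(\<integral>x. e * (b * f x + (\<Sum>t\<in>T. \<Sum>k\<in>K. c t k * g t k x)) \<partial>M)
    = e * (b * (\<integral>x. f x \<partial>M) + (\<Sum>t\<in>T. \<Sum>k\<in>K. c t k * (\<integral>x. g t k x \<partial>M)))"
  using assms by (simp add: Bochner_Integration.integral_add Bochner_Integration.integral_sum
      Bochner_Integration.integrable_sum)

context gauss_interpolation
begin

definition G :: "real \<Rightarrow> real \<Rightarrow> ('k \<Rightarrow> real) \<Rightarrow> real" where
  "G a \<theta> w = exp (a * (sin \<theta>)\<^sup>2 / 2) * S \<theta> w powr (1/\<beta>)"

definition dG :: "real \<Rightarrow> real \<Rightarrow> ('k \<Rightarrow> real) \<Rightarrow> real" where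
  "dG a \<theta> w = exp (a * (sin \<theta>)\<^sup>2 / 2) * (a * sin \<theta> * cos \<theta> * S \<theta> w powr (1/\<beta>)
     + (\<Sum>t\<in>T. \<Sum>k\<in>K. (cos \<theta> * u t k - sin \<theta> * v t k) * (w k * H \<theta> w t)))"

text \<open>\<open>dG\<close> with each factor w_k removed by Gaussian integration by parts in the coordinate \<open>k\<close>;
  the two have the same expectation.\<close>

definition dG_stein :: "real \<Rightarrow> real \<Rightarrow> ('k \<Rightarrow> real) \<Rightarrow> real" where
  "dG_stein a \<theta> w = exp (a * (sin \<theta>)\<^sup>2 / 2) * (a * sin \<theta> * cos \<theta> * S \<theta> w powr (1/\<beta>)
     + (\<Sum>t\<in>T. \<Sum>k\<in>K. (cos \<theta> * u t k - sin \<theta> * v t k) * dH \<theta> w t (\<lambda>s. coef \<theta> s k)))"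

lemma has_real_derivative_G: "((\<lambda>\<theta>. G a \<theta> w) has_real_derivative dG a \<theta> w) (at \<theta>)"
proof -
  define Z' where "Z' s = (\<Sum>k\<in>K. w k * (cos \<theta> * u s k - sin \<theta> * v s k))" for s
  have "((\<lambda>\<theta>. Z \<theta> w s) has_real_derivative Z' s) (at \<theta>)" for s
    unfolding Z_def coef_def Z'_def by (auto intro!: derivative_eq_intros simp: algebra_simps)
  from has_real_derivative_powr_sum_exp[OF finite_T T_nonempty this, where \<beta> = \<beta> and p = "1/\<beta>"]
  have dS: "((\<lambda>\<theta>. S \<theta> w powr (1/\<beta>)) has_real_derivative
      1/\<beta> * S \<theta> w powr (1/\<beta> - 1) * (\<Sum>s\<in>T. \<beta> * Z' s * exp (\<beta> * Z \<theta> w s))) (at \<theta>)"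
    unfolding S_def .
  have "((\<lambda>\<theta>. exp (a * (sin \<theta>)\<^sup>2 / 2)) has_real_derivative
      exp (a * (sin \<theta>)\<^sup>2 / 2) * (a * sin \<theta> * cos \<theta>)) (at \<theta>)"
    by (auto intro!: derivative_eq_intros simp: power2_eq_square)
  from DERIV_mult[OF this dS]
  have "((\<lambda>\<theta>. G a \<theta> w) has_real_derivative exp (a * (sin \<theta>)\<^sup>2 / 2) * (a * sin \<theta> * cos \<theta> * S \<theta> w powr (1/\<beta>)
      + 1/\<beta> * S \<theta> w powr (1/\<beta> - 1) * (\<Sum>s\<in>T. \<beta> * Z' s * exp (\<beta> * Z \<theta> w s)))) (at \<theta>)"
    unfolding G_def by (simp add: algebra_simps)
  moreover have "1/\<beta> * S \<theta> w powr (1/\<beta> - 1) * (\<Sum>s\<in>T. \<beta> * Z' s * exp (\<beta> * Z \<theta> w s))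
      = (\<Sum>t\<in>T. \<Sum>k\<in>K. (cos \<theta> * u t k - sin \<theta> * v t k) * (w k * H \<theta> w t))"
    using beta_gt_1 unfolding H_def Z'_def
    by (simp add: sum_distrib_left sum_distrib_right mult_ac)
  ultimately show ?thesis unfolding dG_def by simp
qed

lemma continuous_on_dG: "continuous_on A (\<lambda>\<theta>. dG a \<theta> w)"
  unfolding dG_def H_def S_def Z_def coef_def
  by (intro continuous_intros) (simp_all add: S_neq_0[unfolded S_def Z_def coef_def])

lemma integrable_S_powr: "integrable (gauss K) (\<lambda>w. S \<theta> w powr p)"
  by (rule integrable_exp_growth[OF finite_K exp_growth_S_powr]) measurable

lemma integral_dG: "(\<integral>w. dG a \<theta> w \<partial>gauss K) = (\<integral>w. dG_stein a \<theta> w \<partial>gauss K)"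
proof -
  have [measurable]: "(\<lambda>w. w k) \<in> borel_measurable (gauss K)" if "k \<in> K" for k
    unfolding gauss_def using that finite_K by measurable
  have "integrable (gauss K) (\<lambda>w. w k * H \<theta> w t)" if "t \<in> T" "k \<in> K" for t k
    using that by (intro integrable_exp_growth[OF finite_K] exp_growth_mult
        exp_growth_coordinate[OF finite_K] exp_growth_H) auto
  moreover have "integrable (gauss K) (\<lambda>w. dH \<theta> w t (\<lambda>s. coef \<theta> s k))" if "t \<in> T" "k \<in> K" for t k
    using that abs_coef_le
    by (intro integrable_exp_growth[OF finite_K, of "\<lambda>\<theta> w. dH \<theta> w t (\<lambda>s. coef \<theta> s k)"] exp_growth_dH) auto
  ultimately show ?thesis
    unfolding dG_def dG_stein_def
    by (simp add: integral_mult_add_double_sum integrable_S_powr integral_coordinate_mult_H)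
qed


lemma sum_velocity_mult_coef:
  "(\<Sum>k\<in>K. (cos \<theta> * u t k - sin \<theta> * v t k) * coef \<theta> s k)
    = sin \<theta> * cos \<theta> * ((\<Sum>k\<in>K. u t k * u s k) - (\<Sum>k\<in>K. v t k * v s k))"
proof -
  have "(cos \<theta> * u t k - sin \<theta> * v t k) * coef \<theta> s k
      = sin \<theta> * cos \<theta> * (u t k * u s k - v t k * v s k)
        + (cos \<theta>)\<^sup>2 * (u t k * v s k) - (sin \<theta>)\<^sup>2 * (u s k * v t k)" for k
    unfolding coef_def by (simp add: algebra_simps power2_eq_square)
  then show ?thesis
    by (simp add: disjoint_support sum_distrib_left sum_subtractf right_diff_distrib)
qed

lemma dH_eq:
  "dH \<theta> w t c = (1/\<beta> - 1) * S \<theta> w powr (1/\<beta> - 1 - 1) * (\<Sum>s\<in>T. c s * (\<beta> * exp (\<beta> * Z \<theta> w s)))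
     * exp (\<beta> * Z \<theta> w t) + c t * (S \<theta> w powr (1/\<beta> - 1) * \<beta> * exp (\<beta> * Z \<theta> w t))"
  unfolding dH_def by (simp add: mult_ac)

lemma sum_mult_dH: "(\<Sum>k\<in>K. d k * dH \<theta> w t (c k)) = dH \<theta> w t (\<lambda>s. \<Sum>k\<in>K. d k * c k s)"
proof -
  define A where "A = (1/\<beta> - 1) * S \<theta> w powr (1/\<beta> - 1 - 1)"
  define B where "B = S \<theta> w powr (1/\<beta> - 1) * \<beta> * exp (\<beta> * Z \<theta> w t)"
  define E where "E s = \<beta> * exp (\<beta> * Z \<theta> w s)" for s
  have "(\<Sum>k\<in>K. d k * dH \<theta> w t (c k))
      = A * (\<Sum>s\<in>T. (\<Sum>k\<in>K. d k * c k s) * E s) * exp (\<beta> * Z \<theta> w t) + (\<Sum>k\<in>K. d k * c k t) * B"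
    unfolding dH_eq A_def[symmetric] B_def[symmetric] E_def[symmetric]
    by (simp add: distrib_left sum.distrib sum_distrib_left sum_distrib_right mult_ac sum.swap[of _ K])
  then show ?thesis
    unfolding dH_eq A_def B_def E_def .
qed

text \<open>With D_ts = E[X_t X_s] - E[Y_t Y_s] and E_t = exp(beta Z_t), \<open>dG_stein\<close> equals
  exp(a sin(theta)^2 / 2) sin(theta) cos(theta) (1 - beta) S^(1/beta - 2) sum_ts (D_ts + a) E_t E_s.\<close>

lemma dG_stein_nonpos:
  assumes cov: "\<And>s t. s \<in> T \<Longrightarrow> t \<in> T \<Longrightarrow> (\<Sum>k\<in>K. v t k * v s k) \<le> (\<Sum>k\<in>K. u t k * u s k) + a"
    and diag: "\<And>t. t \<in> T \<Longrightarrow> (\<Sum>k\<in>K. v t k * v t k) = (\<Sum>k\<in>K. u t k * u t k) + a"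
    and \<theta>: "0 \<le> \<theta>" "\<theta> \<le> pi/2"
  shows "dG_stein a \<theta> w \<le> 0"
proof -
  define D where "D t s = (\<Sum>k\<in>K. u t k * u s k) - (\<Sum>k\<in>K. v t k * v s k)" for t s
  define E where "E s = exp (\<beta> * Z \<theta> w s)" for s
  define P where "P = S \<theta> w powr (1/\<beta> - 1 - 1)"
  define X where "X = (\<Sum>t\<in>T. \<Sum>s\<in>T. D t s * E s * E t)"
  have S: "S \<theta> w = (\<Sum>t\<in>T. E t)" unfolding S_def E_def ..
  have P: "0 < P" unfolding P_def using S_neq_0 by simp
  have powr_succ: "S \<theta> w powr (r + 1) = S \<theta> w powr r * S \<theta> w" for r
    using S_pos[of \<theta> w] by (simp add: powr_add)
  have powr: "S \<theta> w powr (1/\<beta> - 1) = P * S \<theta> w" "S \<theta> w powr (1/\<beta>) = P * S \<theta> w * S \<theta> w"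
    unfolding P_def using powr_succ[of "1/\<beta> - 1 - 1"] powr_succ[of "1/\<beta> - 1"] by simp_all
  have "(\<Sum>t\<in>T. \<Sum>k\<in>K. (cos \<theta> * u t k - sin \<theta> * v t k) * dH \<theta> w t (\<lambda>s. coef \<theta> s k))
      = (\<Sum>t\<in>T. dH \<theta> w t (\<lambda>s. sin \<theta> * cos \<theta> * D t s))"
    unfolding sum_mult_dH sum_velocity_mult_coef D_def ..
  also have "\<dots> = sin \<theta> * cos \<theta> * \<beta> * ((1/\<beta> - 1) * P * X + S \<theta> w powr (1/\<beta> - 1) * (\<Sum>t\<in>T. D t t * E t))"
    unfolding dH_def X_def P_def E_def
    by (simp add: distrib_left sum.distrib sum_distrib_left sum_distrib_right mult_ac)
  also have "(\<Sum>t\<in>T. D t t * E t) = - a * S \<theta> w"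
    unfolding S D_def using diag by (simp add: sum_distrib_left)
  finally have "dG_stein a \<theta> w = exp (a * (sin \<theta>)\<^sup>2 / 2) * (a * (sin \<theta> * cos \<theta>) * (P * S \<theta> w * S \<theta> w)
      + sin \<theta> * cos \<theta> * \<beta> * ((1/\<beta> - 1) * P * X + P * S \<theta> w * (- a * S \<theta> w)))"
    unfolding dG_stein_def powr by (simp add: mult_ac)
  also have "\<dots> = exp (a * (sin \<theta>)\<^sup>2 / 2) * (sin \<theta> * cos \<theta> * (1 - \<beta>) * P * (X + a * (S \<theta> w * S \<theta> w)))"
  proof -
    have "\<beta> * (1/\<beta> - 1) = 1 - \<beta>" using beta_gt_1 by (simp add: field_simps)
    then show ?thesis by algebra
  qed
  also have "X + a * (S \<theta> w * S \<theta> w) = (\<Sum>t\<in>T. \<Sum>s\<in>T. (D t s + a) * E s * E t)"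
    unfolding X_def S by (simp add: sum_product sum.distrib sum_distrib_left algebra_simps)
  also have "exp (a * (sin \<theta>)\<^sup>2 / 2) * (sin \<theta> * cos \<theta> * (1 - \<beta>) * P * \<dots>) \<le> 0"
  proof -
    have "0 \<le> (\<Sum>t\<in>T. \<Sum>s\<in>T. (D t s + a) * E s * E t)"
      using cov unfolding D_def E_def by (intro sum_nonneg mult_nonneg_nonneg) (auto simp: algebra_simps)
    moreover have "0 \<le> sin \<theta>" "0 \<le> cos \<theta>" using \<theta> by (auto intro: sin_ge_zero cos_ge_zero)
    ultimately show ?thesis
      using beta_gt_1 P by (simp add: mult_nonpos_nonneg mult_nonneg_nonpos)
  qed
  finally show ?thesis .
qed

lemma exp_growth_dG: "exp_growth K (dG a)"
proof -
  have "a * (sin \<theta>)\<^sup>2 / 2 \<le> \<bar>a\<bar> / 2" for \<theta>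
  proof -
    have "a * (sin \<theta>)\<^sup>2 \<le> \<bar>a\<bar> * (sin \<theta>)\<^sup>2" by (intro mult_right_mono) auto
    also have "\<dots> \<le> \<bar>a\<bar>" by (intro mult_left_le) (auto simp: abs_square_le_1)
    finally show ?thesis by simp
  qed
  then have "exp_growth K (\<lambda>\<theta> w. exp (a * (sin \<theta>)\<^sup>2 / 2))"
    by (intro exp_growth_bounded[of _ "exp (\<bar>a\<bar> / 2)"]) simp
  then have "exp_growth K (\<lambda>\<theta> w. dG a \<theta> w)"
    unfolding dG_def
    by (intro exp_growth_mult exp_growth_add exp_growth_diff exp_growth_sum exp_growth_S_powr exp_growth_H
        exp_growth_coordinate[OF finite_K] exp_growth_const exp_growth_sin exp_growth_cos) auto
  then show ?thesis by simp
qed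

lemma measurable_dG_pair [measurable]: "(\<lambda>(w, \<theta>). dG a \<theta> w) \<in> borel_measurable (gauss K \<Otimes>\<^sub>M lborel)"
proof -
  have [measurable]: "(\<lambda>(w, \<theta>). w k) \<in> borel_measurable (gauss K \<Otimes>\<^sub>M lborel)" if "k \<in> K" for k
    unfolding gauss_def using that by measurable
  show ?thesis
    unfolding dG_def H_def using finite_K by measurable
qed

lemma soft_max_interpolation:
  assumes cov: "\<And>s t. s \<in> T \<Longrightarrow> t \<in> T \<Longrightarrow> (\<Sum>k\<in>K. v t k * v s k) \<le> (\<Sum>k\<in>K. u t k * u s k) + a"
    and diag: "\<And>t. t \<in> T \<Longrightarrow> (\<Sum>k\<in>K. v t k * v t k) = (\<Sum>k\<in>K. u t k * u t k) + a"
  shows "exp (a/2) * (\<integral>w. (\<Sum>t\<in>T. exp (\<beta> * (\<Sum>k\<in>K. w k * u t k))) powr (1/\<beta>) \<partial>gauss K)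
    \<le> (\<integral>w. (\<Sum>t\<in>T. exp (\<beta> * (\<Sum>k\<in>K. w k * v t k))) powr (1/\<beta>) \<partial>gauss K)"
proof -
  interpret pair_sigma_finite "gauss K" lborel
    by (simp add: pair_sigma_finite_def prob_space_imp_sigma_finite prob_space_gauss lborel.sigma_finite_measure_axioms)
  have G_ends: "G a (pi/2) w = exp (a/2) * (\<Sum>t\<in>T. exp (\<beta> * (\<Sum>k\<in>K. w k * u t k))) powr (1/\<beta>)"
    "G a 0 w = (\<Sum>t\<in>T. exp (\<beta> * (\<Sum>k\<in>K. w k * v t k))) powr (1/\<beta>)" for w
    unfolding G_def S_def Z_def coef_def by simp_all
  have int_G: "integrable (gauss K) (G a \<theta>)" for \<theta>
    unfolding G_def using integrable_S_powr by simp
  have int_dG: "integrable (gauss K \<Otimes>\<^sub>M lborel) (\<lambda>(w, \<theta>). indicator {0..pi/2} \<theta> * dG a \<theta> w)"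
    by (rule integrable_exp_growth_interval[OF finite_K exp_growth_dG]) measurable
  have "(\<integral>w. G a (pi/2) w \<partial>gauss K) - (\<integral>w. G a 0 w \<partial>gauss K) = (\<integral>w. G a (pi/2) w - G a 0 w \<partial>gauss K)"
    using int_G by simp
  also have "\<dots> = (\<integral>w. (\<integral>\<theta>. indicator {0..pi/2} \<theta> * dG a \<theta> w \<partial>lborel) \<partial>gauss K)"
  proof (intro Bochner_Integration.integral_cong refl)
    fix w
    have "(\<integral>\<theta>. indicator {0..pi/2} \<theta> *\<^sub>R dG a \<theta> w \<partial>lborel) = G a (pi/2) w - G a 0 w"
      using has_real_derivative_G continuous_on_dG
      by (intro integral_FTC_atLeastAtMost)
        (auto simp: has_real_derivative_iff_has_vector_derivative[symmetric] has_field_derivative_at_within)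
    then show "G a (pi/2) w - G a 0 w = (\<integral>\<theta>. indicator {0..pi/2} \<theta> * dG a \<theta> w \<partial>lborel)"
      by simp
  qed
  also have "\<dots> = (\<integral>\<theta>. indicator {0..pi/2} \<theta> * (\<integral>w. dG a \<theta> w \<partial>gauss K) \<partial>lborel)"
    using integral_fst'[OF int_dG] integral_snd[OF int_dG] by simp
  also have "\<dots> \<le> 0"
  proof -
    have "(\<integral>w. dG a \<theta> w \<partial>gauss K) \<le> 0" if "0 \<le> \<theta>" "\<theta> \<le> pi/2" for \<theta>
    proof -
      have "0 \<le> (\<integral>w. - dG_stein a \<theta> w \<partial>gauss K)"
        using dG_stein_nonpos[OF cov diag that] by (intro integral_nonneg_AE AE_I2) simp
      then show ?thesis unfolding integral_dG by simp
    qed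
    then have "0 \<le> (\<integral>\<theta>. - (indicator {0..pi/2} \<theta> * (\<integral>w. dG a \<theta> w \<partial>gauss K)) \<partial>lborel)"
      by (intro integral_nonneg_AE AE_I2) (simp add: indicator_def)
    then show ?thesis by simp
  qed
  finally show ?thesis
    unfolding G_ends by simp
qed

end

section \<open>Comparison of soft maxima, maxima and suprema\<close>

text \<open>The two processes are realised on disjoint coordinates of one Gaussian vector indexed by
  \<open>I <+> J\<close>.\<close>

lemma soft_max_comparison:
  fixes u :: "'t \<Rightarrow> 'i \<Rightarrow> real" and v :: "'t \<Rightarrow> 'j \<Rightarrow> real"
  assumes fin: "finite I" "finite J" "finite T" "T \<noteq> {}" and "1 < \<beta>"
    and cov: "\<And>s t. s \<in> T \<Longrightarrow> t \<in> T \<Longrightarrow> (\<Sum>j\<in>J. v t j * v s j) \<le> (\<Sum>i\<in>I. u t i * u s i) + a"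
    and diag: "\<And>t. t \<in> T \<Longrightarrow> (\<Sum>j\<in>J. v t j * v t j) = (\<Sum>i\<in>I. u t i * u t i) + a"
  shows "exp (a/2) * (\<integral>x. (\<Sum>t\<in>T. exp (\<beta> * (\<Sum>i\<in>I. x i * u t i))) powr (1/\<beta>) \<partial>gauss I)
    \<le> (\<integral>y. (\<Sum>t\<in>T. exp (\<beta> * (\<Sum>j\<in>J. y j * v t j))) powr (1/\<beta>) \<partial>gauss J)"
proof -
  define u' :: "'t \<Rightarrow> 'i + 'j \<Rightarrow> real" where "u' t = case_sum (u t) (\<lambda>_. 0)" for t
  define v' :: "'t \<Rightarrow> 'i + 'j \<Rightarrow> real" where "v' t = case_sum (\<lambda>_. 0) (v t)" for t
  interpret gauss_interpolation "I <+> J" T u' v' \<beta>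
    using fin \<open>1 < \<beta>\<close> by unfold_locales (auto simp: u'_def v'_def split: sum.split)
  have sum_u': "(\<Sum>k\<in>I <+> J. f k * u' t k) = (\<Sum>i\<in>I. f (Inl i) * u t i)"
    and sum_v': "(\<Sum>k\<in>I <+> J. f k * v' t k) = (\<Sum>j\<in>J. f (Inr j) * v t j)" for f t
    using fin by (simp_all add: sum.Plus u'_def v'_def)
  have [simp]: "u' t (Inl i) = u t i" "v' t (Inr j) = v t j" for t i j
    by (simp_all add: u'_def v'_def)
  have "exp (a/2) * (\<integral>w. (\<Sum>t\<in>T. exp (\<beta> * (\<Sum>k\<in>I <+> J. w k * u' t k))) powr (1/\<beta>) \<partial>gauss (I <+> J))
    \<le> (\<integral>w. (\<Sum>t\<in>T. exp (\<beta> * (\<Sum>k\<in>I <+> J. w k * v' t k))) powr (1/\<beta>) \<partial>gauss (I <+> J))"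
    by (rule soft_max_interpolation) (simp_all add: sum_u' sum_v' cov diag)
  moreover have "(\<integral>w. (\<Sum>t\<in>T. exp (\<beta> * (\<Sum>k\<in>I <+> J. w k * u' t k))) powr (1/\<beta>) \<partial>gauss (I <+> J))
      = (\<integral>x. (\<Sum>t\<in>T. exp (\<beta> * (\<Sum>i\<in>I. x i * u t i))) powr (1/\<beta>) \<partial>gauss I)"
    using integral_gauss_reindex[of Inl I "I <+> J" "\<lambda>x. (\<Sum>t\<in>T. exp (\<beta> * (\<Sum>i\<in>I. x i * u t i))) powr (1/\<beta>)"]
    unfolding sum_u' gauss_def using fin by (auto simp: Pi_iff)
  moreover have "(\<integral>w. (\<Sum>t\<in>T. exp (\<beta> * (\<Sum>k\<in>I <+> J. w k * v' t k))) powr (1/\<beta>) \<partial>gauss (I <+> J))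
      = (\<integral>y. (\<Sum>t\<in>T. exp (\<beta> * (\<Sum>j\<in>J. y j * v t j))) powr (1/\<beta>) \<partial>gauss J)"
    using integral_gauss_reindex[of Inr J "I <+> J" "\<lambda>y. (\<Sum>t\<in>T. exp (\<beta> * (\<Sum>j\<in>J. y j * v t j))) powr (1/\<beta>)"]
    unfolding sum_v' gauss_def using fin by (auto simp: Pi_iff)
  ultimately show ?thesis by simp
qed

lemma exp_Max_le_powr_sum_exp:
  fixes f :: "'t \<Rightarrow> real"
  assumes "finite T" "T \<noteq> {}" "0 < \<beta>"
  shows "exp (Max (f ` T)) \<le> (\<Sum>t\<in>T. exp (\<beta> * f t)) powr (1/\<beta>)"
proof -
  have "Max (f ` T) \<in> f ` T" using assms by (intro Max_in) auto
  then obtain t where t: "t \<in> T" "f t = Max (f ` T)" by (metis imageE)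
  have "exp (\<beta> * f t) \<le> (\<Sum>t\<in>T. exp (\<beta> * f t))"
    using member_le_sum[of t T "\<lambda>t. exp (\<beta> * f t)"] assms(1) t(1) by simp
  then have "exp (\<beta> * f t) powr (1/\<beta>) \<le> (\<Sum>t\<in>T. exp (\<beta> * f t)) powr (1/\<beta>)"
    using assms(3) by (intro powr_mono2) auto
  then show ?thesis
    using t(2) assms(3) by (simp add: powr_def)
qed

lemma powr_sum_exp_le_exp_Max:
  fixes f :: "'t \<Rightarrow> real"
  assumes "finite T" "T \<noteq> {}" "0 < \<beta>"
  shows "(\<Sum>t\<in>T. exp (\<beta> * f t)) powr (1/\<beta>) \<le> real (card T) powr (1/\<beta>) * exp (Max (f ` T))"
proof -
  have "(\<Sum>t\<in>T. exp (\<beta> * f t)) \<le> (\<Sum>t\<in>T. exp (\<beta> * Max (f ` T)))"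
    using assms by (intro sum_mono) auto
  then have "(\<Sum>t\<in>T. exp (\<beta> * f t)) powr (1/\<beta>) \<le> (real (card T) * exp (\<beta> * Max (f ` T))) powr (1/\<beta>)"
    using assms by (intro powr_mono2) (auto intro: sum_nonneg)
  also have "\<dots> = real (card T) powr (1/\<beta>) * exp (\<beta> * Max (f ` T)) powr (1/\<beta>)"
    by (simp add: powr_mult)
  also have "exp (\<beta> * Max (f ` T)) powr (1/\<beta>) = exp (Max (f ` T))"
    using assms(3) by (simp add: powr_def)
  finally show ?thesis .
qed

lemma abs_sum_mult_le:
  fixes x w :: "'i \<Rightarrow> real"
  assumes "\<And>i. i \<in> I \<Longrightarrow> \<bar>w i\<bar> \<le> R"
  shows "\<bar>\<Sum>i\<in>I. x i * w i\<bar> \<le> R * (\<Sum>i\<in>I. \<bar>x i\<bar>)"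
proof -
  have "\<bar>\<Sum>i\<in>I. x i * w i\<bar> \<le> (\<Sum>i\<in>I. \<bar>x i * w i\<bar>)"
    by (rule sum_abs)
  also have "\<dots> \<le> (\<Sum>i\<in>I. \<bar>x i\<bar> * R)"
    using assms by (intro sum_mono) (simp add: abs_mult mult_left_mono)
  finally show ?thesis by (simp add: sum_distrib_left mult_ac)
qed

lemma integrable_gauss_exp_le_linear:
  assumes "finite I" "f \<in> borel_measurable (gauss I)" "\<And>x. f x \<le> L * (\<Sum>i\<in>I. \<bar>x i\<bar>)"
  shows "integrable (gauss I) (\<lambda>x. exp (f x))"
  using assms by (intro integrable_gauss_exp_growth[of I _ 1 L]) auto

lemma integrable_gauss_exp_Max:
  fixes u :: "'t \<Rightarrow> 'i \<Rightarrow> real"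
  assumes "finite I" "finite T" "T \<noteq> {}"
  shows "integrable (gauss I) (\<lambda>x. exp (Max ((\<lambda>t. \<Sum>i\<in>I. x i * u t i) ` T)))"
proof (rule integrable_gauss_exp_le_linear[OF assms(1)])
  define R where "R = Max ((\<lambda>(t, i). \<bar>u t i\<bar>) ` (T \<times> I))"
  fix x :: "'i \<Rightarrow> real"
  have "Max ((\<lambda>t. \<Sum>i\<in>I. x i * u t i) ` T) \<in> (\<lambda>t. \<Sum>i\<in>I. x i * u t i) ` T"
    using assms by (intro Max_in) auto
  then obtain t where "t \<in> T" "Max ((\<lambda>t. \<Sum>i\<in>I. x i * u t i) ` T) = (\<Sum>i\<in>I. x i * u t i)"
    by blast
  moreover have "\<bar>u t i\<bar> \<le> R" if "t \<in> T" "i \<in> I" for t i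
    unfolding R_def using assms that by (intro Max_ge) auto
  ultimately show "Max ((\<lambda>t. \<Sum>i\<in>I. x i * u t i) ` T) \<le> R * (\<Sum>i\<in>I. \<bar>x i\<bar>)"
    using abs_sum_mult_le[of I "u t" R x] by (simp add: abs_le_iff)
qed (unfold gauss_def, use assms in measurable)

lemma max_comparison:
  fixes u :: "'t \<Rightarrow> 'i \<Rightarrow> real" and v :: "'t \<Rightarrow> 'j \<Rightarrow> real"
  assumes fin: "finite I" "finite J" "finite T" "T \<noteq> {}"
    and cov: "\<And>s t. s \<in> T \<Longrightarrow> t \<in> T \<Longrightarrow> (\<Sum>j\<in>J. v t j * v s j) \<le> (\<Sum>i\<in>I. u t i * u s i) + a"
    and diag: "\<And>t. t \<in> T \<Longrightarrow> (\<Sum>j\<in>J. v t j * v t j) = (\<Sum>i\<in>I. u t i * u t i) + a"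
  shows "exp (a/2) * (\<integral>x. exp (Max ((\<lambda>t. \<Sum>i\<in>I. x i * u t i) ` T)) \<partial>gauss I)
    \<le> (\<integral>y. exp (Max ((\<lambda>t. \<Sum>j\<in>J. y j * v t j) ` T)) \<partial>gauss J)"
    (is "?L \<le> ?R")
proof -
  have soft: "?L \<le> real (card T) powr (1/\<beta>) * ?R" if "1 < \<beta>" for \<beta>
  proof -
    have int_soft: "integrable (gauss K) (\<lambda>x. (\<Sum>t\<in>T. exp (\<beta> * (\<Sum>i\<in>K. x i * w t i))) powr (1/\<beta>))"
      if "finite K" for K and w :: "'t \<Rightarrow> 'k \<Rightarrow> real"
    proof (rule Bochner_Integration.integrable_bound)
      show "integrable (gauss K) (\<lambda>x. real (card T) powr (1/\<beta>) * exp (Max ((\<lambda>t. \<Sum>i\<in>K. x i * w t i) ` T)))"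
        using integrable_gauss_exp_Max[OF \<open>finite K\<close> fin(3,4)] by simp
      show "AE x in gauss K. norm ((\<Sum>t\<in>T. exp (\<beta> * (\<Sum>i\<in>K. x i * w t i))) powr (1/\<beta>))
          \<le> norm (real (card T) powr (1/\<beta>) * exp (Max ((\<lambda>t. \<Sum>i\<in>K. x i * w t i) ` T)))"
        using powr_sum_exp_le_exp_Max[OF fin(3,4)] \<open>1 < \<beta>\<close> by (intro AE_I2) simp
    qed (unfold gauss_def, use that fin in measurable)
    have "?L \<le> exp (a/2) * (\<integral>x. (\<Sum>t\<in>T. exp (\<beta> * (\<Sum>i\<in>I. x i * u t i))) powr (1/\<beta>) \<partial>gauss I)"
      using \<open>1 < \<beta>\<close> integrable_gauss_exp_Max[OF fin(1,3,4)] int_soft[OF fin(1)]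
      by (intro mult_left_mono integral_mono exp_Max_le_powr_sum_exp[OF fin(3,4)]) auto
    also have "\<dots> \<le> (\<integral>y. (\<Sum>t\<in>T. exp (\<beta> * (\<Sum>j\<in>J. y j * v t j))) powr (1/\<beta>) \<partial>gauss J)"
      by (rule soft_max_comparison[OF fin \<open>1 < \<beta>\<close> cov diag])
    also have "\<dots> \<le> (\<integral>y. real (card T) powr (1/\<beta>) * exp (Max ((\<lambda>t. \<Sum>j\<in>J. y j * v t j) ` T)) \<partial>gauss J)"
      using \<open>1 < \<beta>\<close> integrable_gauss_exp_Max[OF fin(2,3,4)] int_soft[OF fin(2)]
      by (intro integral_mono powr_sum_exp_le_exp_Max[OF fin(3,4)]) auto
    finally show ?thesis by simp
  qed
  have "(\<lambda>n. 1 / (real n + 2)) \<longlonglongrightarrow> 0"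
    using LIMSEQ_ignore_initial_segment[OF lim_inverse_n', of 2] by (simp add: add.commute)
  then have "(\<lambda>n. real (card T) powr (1 / (real n + 2)) * ?R) \<longlonglongrightarrow> real (card T) powr 0 * ?R"
    using fin by (intro tendsto_intros) auto
  then have "?L \<le> real (card T) powr 0 * ?R"
    by (rule LIMSEQ_le_const) (use soft in \<open>auto simp: add.commute\<close>)
  then show ?thesis using fin by simp
qed

lemma finite_net:
  fixes u :: "'t \<Rightarrow> 'i \<Rightarrow> real"
  assumes "finite I" and bounded: "\<And>t i. t \<in> T \<Longrightarrow> i \<in> I \<Longrightarrow> \<bar>u t i\<bar> \<le> R" and "0 < \<epsilon>"
  shows "\<exists>F. finite F \<and> F \<subseteq> T \<and> (\<forall>t\<in>T. \<exists>t'\<in>F. \<forall>i\<in>I. \<bar>u t' i - u t i\<bar> < \<epsilon>)"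
proof (intro exI conjI ballI)
  define cell where "cell t = (\<lambda>i\<in>I. \<lfloor>u t i / \<epsilon>\<rfloor>)" for t
  define rep where "rep c = (SOME t. t \<in> T \<and> cell t = c)" for c
  have rep: "rep (cell t) \<in> T \<and> cell (rep (cell t)) = cell t" if "t \<in> T" for t
    unfolding rep_def using someI[of "\<lambda>s. s \<in> T \<and> cell s = cell t" t] that by simp
  have "\<lfloor>- R / \<epsilon>\<rfloor> \<le> \<lfloor>u t i / \<epsilon>\<rfloor> \<and> \<lfloor>u t i / \<epsilon>\<rfloor> \<le> \<lfloor>R / \<epsilon>\<rfloor>" if "t \<in> T" "i \<in> I" for t i
    using bounded[OF that] \<open>0 < \<epsilon>\<close>
    by (intro conjI floor_mono divide_right_mono) (auto simp: abs_le_iff)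
  then have "cell ` T \<subseteq> Pi\<^sub>E I (\<lambda>_. {\<lfloor>- R / \<epsilon>\<rfloor>..\<lfloor>R / \<epsilon>\<rfloor>})"
    by (auto simp: cell_def)
  then have "finite (cell ` T)"
    by (rule finite_subset) (use \<open>finite I\<close> in \<open>intro finite_PiE, auto\<close>)
  then show "finite (rep ` cell ` T)" by simp
  show "rep ` cell ` T \<subseteq> T" using rep by auto
  fix t assume "t \<in> T"
  have "\<bar>u (rep (cell t)) i - u t i\<bar> < \<epsilon>" if "i \<in> I" for i
  proof -
    have "cell (rep (cell t)) i = cell t i" using rep[OF \<open>t \<in> T\<close>] by simp
    then have "\<lfloor>u (rep (cell t)) i / \<epsilon>\<rfloor> = \<lfloor>u t i / \<epsilon>\<rfloor>" using that by (simp add: cell_def)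
    then have "\<bar>u (rep (cell t)) i / \<epsilon> - u t i / \<epsilon>\<bar> < 1"
      using floor_correct[of "u (rep (cell t)) i / \<epsilon>"] floor_correct[of "u t i / \<epsilon>"] by linarith
    then show ?thesis using \<open>0 < \<epsilon>\<close> by (simp add: diff_divide_distrib[symmetric] abs_divide)
  qed
  then show "\<exists>t'\<in>rep ` cell ` T. \<forall>i\<in>I. \<bar>u t' i - u t i\<bar> < \<epsilon>"
    using \<open>t \<in> T\<close> by blast
qed

lemma mult_SUP:
  fixes g :: "'t \<Rightarrow> real"
  assumes "0 \<le> c" "T \<noteq> {}" "bdd_above (g ` T)"
  shows "c * (SUP t\<in>T. g t) = (SUP t\<in>T. c * g t)"
  using continuous_at_Sup_mono[of "(*) c" "g ` T"] assms
  by (simp add: mono_def mult_left_mono image_image continuous_intros)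

context
  fixes I :: "'i set" and T :: "'t set" and u :: "'t \<Rightarrow> 'i \<Rightarrow> real" and R :: real
  assumes finite_I: "finite I" and T_nonempty: "T \<noteq> {}"
    and bounded: "\<And>t i. t \<in> T \<Longrightarrow> i \<in> I \<Longrightarrow> \<bar>u t i\<bar> \<le> R"
begin

lemma SUP_linear_le: "(SUP t\<in>T. \<Sum>i\<in>I. x i * u t i) \<le> R * (\<Sum>i\<in>I. \<bar>x i\<bar>)"
  using abs_sum_mult_le[of I "u _" R x] bounded T_nonempty
  by (intro cSUP_least) (auto simp: abs_le_iff)

lemma bdd_above_linear: "bdd_above ((\<lambda>t. \<Sum>i\<in>I. x i * u t i) ` T)"
  using abs_sum_mult_le[of I "u _" R x] bounded
  by (intro bdd_aboveI[of _ "R * (\<Sum>i\<in>I. \<bar>x i\<bar>)"]) (auto simp: abs_le_iff)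

lemma Max_le_SUP_linear:
  "finite F \<Longrightarrow> F \<noteq> {} \<Longrightarrow> F \<subseteq> T \<Longrightarrow>
    Max ((\<lambda>t. \<Sum>i\<in>I. x i * u t i) ` F) \<le> (SUP t\<in>T. \<Sum>i\<in>I. x i * u t i)"
  using bdd_above_linear by (auto intro!: cSUP_upper)

lemma SUP_linear_le_Max_net:
  assumes "finite F" and net: "\<And>t. t \<in> T \<Longrightarrow> \<exists>t'\<in>F. \<forall>i\<in>I. \<bar>u t' i - u t i\<bar> < \<epsilon>"
  shows "(SUP t\<in>T. \<Sum>i\<in>I. x i * u t i) \<le> Max ((\<lambda>t. \<Sum>i\<in>I. x i * u t i) ` F) + \<epsilon> * (\<Sum>i\<in>I. \<bar>x i\<bar>)"
proof (rule cSUP_least[OF T_nonempty])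
  fix t assume "t \<in> T"
  then obtain t' where t': "t' \<in> F" "\<And>i. i \<in> I \<Longrightarrow> \<bar>u t i - u t' i\<bar> < \<epsilon>"
    using net by (fastforce simp: abs_minus_commute)
  have "(\<Sum>i\<in>I. x i * u t i) - (\<Sum>i\<in>I. x i * u t' i) = (\<Sum>i\<in>I. x i * (u t i - u t' i))"
    by (simp add: sum_subtractf right_diff_distrib)
  also have "\<dots> \<le> \<epsilon> * (\<Sum>i\<in>I. \<bar>x i\<bar>)"
  proof -
    have "\<bar>u t i - u t' i\<bar> \<le> \<epsilon>" if "i \<in> I" for i
      using t'(2)[OF that] by simp
    then show ?thesis
      using abs_sum_mult_le[of I "\<lambda>i. u t i - u t' i" \<epsilon> x] by (simp add: abs_le_iff)
  qed
  moreover have "(\<Sum>i\<in>I. x i * u t' i) \<le> Max ((\<lambda>t. \<Sum>i\<in>I. x i * u t i) ` F)"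
    using \<open>finite F\<close> t'(1) by (intro Max_ge) auto
  ultimately show "(\<Sum>i\<in>I. x i * u t i) \<le> Max ((\<lambda>t. \<Sum>i\<in>I. x i * u t i) ` F) + \<epsilon> * (\<Sum>i\<in>I. \<bar>x i\<bar>)"
    by simp
qed

lemma nets_Max_tendsto_SUP:
  obtains F where "\<And>n. finite (F n)" "\<And>n. F n \<noteq> {}" "\<And>n. F n \<subseteq> T"
    "\<And>x. (\<lambda>n. Max ((\<lambda>t. \<Sum>i\<in>I. x i * u t i) ` F n)) \<longlonglongrightarrow> (SUP t\<in>T. \<Sum>i\<in>I. x i * u t i)"
proof -
  have "\<forall>n. \<exists>F. finite F \<and> F \<subseteq> T \<and> (\<forall>t\<in>T. \<exists>t'\<in>F. \<forall>i\<in>I. \<bar>u t' i - u t i\<bar> < 1 / (real n + 1))"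
    using finite_net[of I T u R] finite_I bounded by simp
  then obtain F where "\<forall>n. finite (F n) \<and> F n \<subseteq> T \<and>
      (\<forall>t\<in>T. \<exists>t'\<in>F n. \<forall>i\<in>I. \<bar>u t' i - u t i\<bar> < 1 / (real n + 1))"
    by (rule choice[THEN exE])
  then have F: "\<And>n. finite (F n)" "\<And>n. F n \<subseteq> T"
    and net: "\<And>n t. t \<in> T \<Longrightarrow> \<exists>t'\<in>F n. \<forall>i\<in>I. \<bar>u t' i - u t i\<bar> < 1 / (real n + 1)"
    by blast+
  have F_ne: "F n \<noteq> {}" for n using net T_nonempty by blast
  show ?thesis
  proof (rule that[OF F(1) F_ne F(2)])
    fix x :: "'i \<Rightarrow> real"
    let ?g = "\<lambda>t. \<Sum>i\<in>I. x i * u t i" and ?N = "\<Sum>i\<in>I. \<bar>x i\<bar>"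
    have "(\<lambda>n. 1 / (real n + 1)) \<longlonglongrightarrow> 0"
      using LIMSEQ_ignore_initial_segment[OF lim_inverse_n', of 1] by (simp add: add.commute)
    from tendsto_diff[OF tendsto_const tendsto_mult[OF this tendsto_const]]
    have lower: "(\<lambda>n. (SUP t\<in>T. ?g t) - 1 / (real n + 1) * ?N) \<longlonglongrightarrow> (SUP t\<in>T. ?g t)"
      by simp
    show "(\<lambda>n. Max (?g ` F n)) \<longlonglongrightarrow> (SUP t\<in>T. ?g t)"
    proof (rule tendsto_sandwich[OF _ _ lower tendsto_const])
      show "\<forall>\<^sub>F n in sequentially. (SUP t\<in>T. ?g t) - 1 / (real n + 1) * ?N \<le> Max (?g ` F n)"
        using SUP_linear_le_Max_net[OF F(1) net] by (intro always_eventually allI) (simp add: algebra_simps)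
      show "\<forall>\<^sub>F n in sequentially. Max (?g ` F n) \<le> (SUP t\<in>T. ?g t)"
        using Max_le_SUP_linear[OF F(1) F_ne F(2)] by (intro always_eventually allI)
    qed
  qed
qed

lemma measurable_Max_linear:
  "finite F \<Longrightarrow> (\<lambda>x. Max ((\<lambda>t. \<Sum>i\<in>I. x i * u t i) ` F)) \<in> borel_measurable (gauss I)"
  unfolding gauss_def using finite_I by measurable

lemma measurable_SUP_linear [measurable]:
  "(\<lambda>x. SUP t\<in>T. \<Sum>i\<in>I. x i * u t i) \<in> borel_measurable (gauss I)"
proof -
  obtain F where F: "\<And>n. finite (F n)"
    and lim: "\<And>x. (\<lambda>n. Max ((\<lambda>t. \<Sum>i\<in>I. x i * u t i) ` F n)) \<longlonglongrightarrow> (SUP t\<in>T. \<Sum>i\<in>I. x i * u t i)"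
    by (rule nets_Max_tendsto_SUP) blast
  show ?thesis
    by (rule borel_measurable_LIMSEQ_real[OF lim measurable_Max_linear[OF F]])
qed

lemma integrable_exp_SUP_linear:
  "integrable (gauss I) (\<lambda>x. exp (SUP t\<in>T. \<Sum>i\<in>I. x i * u t i))"
  using SUP_linear_le by (intro integrable_gauss_exp_le_linear[OF finite_I]) auto

lemma nets_integral_exp_Max_tendsto:
  obtains F where "\<And>n. finite (F n)" "\<And>n. F n \<noteq> {}" "\<And>n. F n \<subseteq> T"
    "(\<lambda>n. \<integral>x. exp (Max ((\<lambda>t. \<Sum>i\<in>I. x i * u t i) ` F n)) \<partial>gauss I)
      \<longlonglongrightarrow> (\<integral>x. exp (SUP t\<in>T. \<Sum>i\<in>I. x i * u t i) \<partial>gauss I)"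
proof -
  obtain F where F: "\<And>n. finite (F n)" "\<And>n. F n \<noteq> {}" "\<And>n. F n \<subseteq> T"
    and lim: "\<And>x. (\<lambda>n. Max ((\<lambda>t. \<Sum>i\<in>I. x i * u t i) ` F n)) \<longlonglongrightarrow> (SUP t\<in>T. \<Sum>i\<in>I. x i * u t i)"
    by (rule nets_Max_tendsto_SUP) blast
  have "(\<lambda>n. \<integral>x. exp (Max ((\<lambda>t. \<Sum>i\<in>I. x i * u t i) ` F n)) \<partial>gauss I)
      \<longlonglongrightarrow> (\<integral>x. exp (SUP t\<in>T. \<Sum>i\<in>I. x i * u t i) \<partial>gauss I)"
  proof (rule integral_dominated_convergence[where w = "\<lambda>x. exp (SUP t\<in>T. \<Sum>i\<in>I. x i * u t i)"])
    show "(\<lambda>x. exp (SUP t\<in>T. \<Sum>i\<in>I. x i * u t i)) \<in> borel_measurable (gauss I)"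
      by measurable
    show "(\<lambda>x. exp (Max ((\<lambda>t. \<Sum>i\<in>I. x i * u t i) ` F n))) \<in> borel_measurable (gauss I)" for n
      using measurable_Max_linear[OF F(1)] by measurable
    show "integrable (gauss I) (\<lambda>x. exp (SUP t\<in>T. \<Sum>i\<in>I. x i * u t i))"
      by (rule integrable_exp_SUP_linear)
    show "AE x in gauss I. (\<lambda>n. exp (Max ((\<lambda>t. \<Sum>i\<in>I. x i * u t i) ` F n)))
        \<longlonglongrightarrow> exp (SUP t\<in>T. \<Sum>i\<in>I. x i * u t i)"
      using lim by (intro AE_I2 tendsto_exp)
    show "AE x in gauss I. norm (exp (Max ((\<lambda>t. \<Sum>i\<in>I. x i * u t i) ` F n)))
        \<le> exp (SUP t\<in>T. \<Sum>i\<in>I. x i * u t i)" for n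
      using Max_le_SUP_linear[OF F(1,2,3)] by (intro AE_I2) simp
  qed
  with F show ?thesis using that by blast
qed

end

lemma sup_comparison:
  fixes u :: "'t \<Rightarrow> 'i \<Rightarrow> real" and v :: "'t \<Rightarrow> 'j \<Rightarrow> real"
  assumes "finite I" "finite J" "T \<noteq> {}"
    and bounded: "\<And>t i. t \<in> T \<Longrightarrow> i \<in> I \<Longrightarrow> \<bar>u t i\<bar> \<le> R" "\<And>t j. t \<in> T \<Longrightarrow> j \<in> J \<Longrightarrow> \<bar>v t j\<bar> \<le> R"
    and cov: "\<And>s t. s \<in> T \<Longrightarrow> t \<in> T \<Longrightarrow> (\<Sum>j\<in>J. v t j * v s j) \<le> (\<Sum>i\<in>I. u t i * u s i) + a"
    and diag: "\<And>t. t \<in> T \<Longrightarrow> (\<Sum>j\<in>J. v t j * v t j) = (\<Sum>i\<in>I. u t i * u t i) + a"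
  shows "exp (a/2) * (\<integral>x. exp (SUP t\<in>T. \<Sum>i\<in>I. x i * u t i) \<partial>gauss I)
    \<le> (\<integral>y. exp (SUP t\<in>T. \<Sum>j\<in>J. y j * v t j) \<partial>gauss J)"
proof (rule nets_integral_exp_Max_tendsto[of I T u R])
  show "finite I" "T \<noteq> {}" "\<And>t i. t \<in> T \<Longrightarrow> i \<in> I \<Longrightarrow> \<bar>u t i\<bar> \<le> R"
    using assms by auto
  fix F assume F: "\<And>n. finite (F n)" "\<And>n. F n \<noteq> {}" "\<And>n. F n \<subseteq> T"
    and lim: "(\<lambda>n. \<integral>x. exp (Max ((\<lambda>t. \<Sum>i\<in>I. x i * u t i) ` F n)) \<partial>gauss I)
      \<longlonglongrightarrow> (\<integral>x. exp (SUP t\<in>T. \<Sum>i\<in>I. x i * u t i) \<partial>gauss I)"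
  have "exp (a/2) * (\<integral>x. exp (Max ((\<lambda>t. \<Sum>i\<in>I. x i * u t i) ` F n)) \<partial>gauss I)
      \<le> (\<integral>y. exp (SUP t\<in>T. \<Sum>j\<in>J. y j * v t j) \<partial>gauss J)" for n
  proof -
    have "exp (a/2) * (\<integral>x. exp (Max ((\<lambda>t. \<Sum>i\<in>I. x i * u t i) ` F n)) \<partial>gauss I)
        \<le> (\<integral>y. exp (Max ((\<lambda>t. \<Sum>j\<in>J. y j * v t j) ` F n)) \<partial>gauss J)"
      by (intro max_comparison assms(1,2) F(1,2) cov diag) (use F(3) in blast)+
    also have "\<dots> \<le> (\<integral>y. exp (SUP t\<in>T. \<Sum>j\<in>J. y j * v t j) \<partial>gauss J)"
    proof (intro integral_mono integrable_gauss_exp_Max[OF assms(2) F(1,2)])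
      show "integrable (gauss J) (\<lambda>y. exp (SUP t\<in>T. \<Sum>j\<in>J. y j * v t j))"
        by (rule integrable_exp_SUP_linear[of J T v R]) (use assms(2,3) bounded(2) in auto)
      fix y :: "'j \<Rightarrow> real"
      have "Max ((\<lambda>t. \<Sum>j\<in>J. y j * v t j) ` F n) \<le> (SUP t\<in>T. \<Sum>j\<in>J. y j * v t j)"
        by (rule Max_le_SUP_linear[of J T v R]) (use assms(2,3) bounded(2) F in auto)
      then show "exp (Max ((\<lambda>t. \<Sum>j\<in>J. y j * v t j) ` F n)) \<le> exp (SUP t\<in>T. \<Sum>j\<in>J. y j * v t j)"
        by simp
    qed
    finally show ?thesis .
  qed
  then show "exp (a/2) * (\<integral>x. exp (SUP t\<in>T. \<Sum>i\<in>I. x i * u t i) \<partial>gauss I)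
      \<le> (\<integral>y. exp (SUP t\<in>T. \<Sum>j\<in>J. y j * v t j) \<partial>gauss J)"
    by (intro LIMSEQ_le_const2[OF tendsto_mult_left[OF lim]]) auto
qed

lemma mult_SUP_linear:
  fixes u :: "'t \<Rightarrow> 'i \<Rightarrow> real"
  assumes "finite I" "T \<noteq> {}" "\<And>t i. t \<in> T \<Longrightarrow> i \<in> I \<Longrightarrow> \<bar>u t i\<bar> \<le> R" "0 \<le> c"
  shows "c * (SUP t\<in>T. \<Sum>i\<in>I. x i * u t i) = (SUP t\<in>T. \<Sum>i\<in>I. x i * (c * u t i))"
proof -
  have "bdd_above ((\<lambda>t. \<Sum>i\<in>I. x i * u t i) ` T)"
    by (rule bdd_above_linear[of I T u R]) (use assms in auto)
  then show ?thesis
    using mult_SUP[OF assms(4,2)] by (simp add: sum_distrib_left mult_ac)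
qed

section \<open>Tensor processes on products of spheres\<close>

lemma integral_exp_pos:
  fixes f :: "'a \<Rightarrow> real"
  assumes "prob_space M" "integrable M (\<lambda>x. exp (f x))"
  shows "0 < (\<integral>x. exp (f x) \<partial>M)"
proof -
  interpret prob_space M by fact
  have "(\<integral>x. exp (f x) \<partial>M) \<noteq> 0"
  proof
    assume "(\<integral>x. exp (f x) \<partial>M) = 0"
    then have "AE x in M. exp (f x) = 0"
      using integral_nonneg_eq_0_iff_AE[OF assms(2)] by simp
    then show False by simp
  qed
  moreover have "0 \<le> (\<integral>x. exp (f x) \<partial>M)" by simp
  ultimately show ?thesis by (simp add: less_le)
qed

lemma add_ln_le_ln_of_exp_mult_le:
  fixes b x y :: real
  assumes "exp b * x \<le> y" "0 < x"
  shows "b + ln x \<le> ln y"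
proof -
  have "0 < exp b * x" using assms(2) by simp
  then have "ln (exp b * x) \<le> ln y" using assms(1) by simp
  then show ?thesis using assms(2) by (simp add: ln_mult)
qed

lemma tuples_Suc: "tuples n (Suc p) = (\<lambda>(i, is). i # is) ` ({..<n} \<times> tuples n p)"
proof (intro equalityI subsetI)
  fix xs assume "xs \<in> tuples n (Suc p)"
  then obtain i js where "xs = i # js" "i < n" "js \<in> tuples n p"
    unfolding tuples_def by (cases xs) auto
  then show "xs \<in> (\<lambda>(i, is). i # is) ` ({..<n} \<times> tuples n p)" by force
qed (auto simp: tuples_def)

lemma finite_tuples: "finite (tuples n p)"
  using finite_lists_length_eq[of "{..<n}" p] unfolding tuples_def by (simp add: conj_commute)

lemma sum_tuples_prod: "(\<Sum>is\<in>tuples n p. \<Prod>j<p. f j (is ! j)) = (\<Prod>j<p. \<Sum>i<n. f j i :: real)"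
proof (induction p arbitrary: f)
  case 0
  have "tuples n 0 = {[]}" unfolding tuples_def by auto
  then show ?case by simp
next
  case (Suc p)
  have inj: "inj_on (\<lambda>(i, is). i # is) ({..<n} \<times> tuples n p)" by (auto simp: inj_on_def)
  have "(\<Sum>is\<in>tuples n (Suc p). \<Prod>j<Suc p. f j (is ! j))
      = (\<Sum>(i, is)\<in>{..<n} \<times> tuples n p. f 0 i * (\<Prod>j<p. f (Suc j) (is ! j)))"
    unfolding tuples_Suc sum.reindex[OF inj]
    by (simp add: case_prod_beta' prod.lessThan_Suc_shift del: prod.lessThan_Suc)
  also have "\<dots> = (\<Sum>i<n. f 0 i) * (\<Sum>is\<in>tuples n p. \<Prod>j<p. f (Suc j) (is ! j))"
    by (simp add: sum.cartesian_product[symmetric] sum_product)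
  also have "\<dots> = (\<Prod>j<Suc p. \<Sum>i<n. f j i)"
    using Suc.IH[of "\<lambda>j. f (Suc j)"] by (simp add: prod.lessThan_Suc_shift del: prod.lessThan_Suc)
  finally show ?case .
qed

lemma unit_sphere_abs_le_1: "x \<in> unit_sphere n \<Longrightarrow> \<bar>x i\<bar> \<le> 1"
proof (cases "i < n")
  case True
  assume x: "x \<in> unit_sphere n"
  have "(x i)\<^sup>2 \<le> (\<Sum>k<n. (x k)\<^sup>2)" using True by (intro member_le_sum) auto
  then show ?thesis using x unfolding unit_sphere_def by (simp add: abs_square_le_1)
qed (auto simp: unit_sphere_def)

lemma unit_sphere_abs_inner_le_1:
  assumes "x \<in> unit_sphere n" "y \<in> unit_sphere n"
  shows "\<bar>\<Sum>i<n. x i * y i\<bar> \<le> 1"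
proof -
  have "\<bar>\<Sum>i<n. x i * y i\<bar> \<le> (\<Sum>i<n. ((x i)\<^sup>2 + (y i)\<^sup>2) / 2)"
    by (intro order_trans[OF sum_abs] sum_mono)
      (use zero_le_power2[of "\<bar>x _\<bar> - \<bar>y _\<bar>"] in \<open>simp add: power2_eq_square abs_mult algebra_simps\<close>)
  also have "\<dots> = 1"
    using assms unfolding unit_sphere_def by (simp add: sum_divide_distrib[symmetric] sum.distrib)
  finally show ?thesis .
qed

lemma sum_le_prod_add:
  fixes a :: "nat \<Rightarrow> real"
  assumes "0 < p" "\<And>j. j < p \<Longrightarrow> \<bar>a j\<bar> \<le> 1"
  shows "(\<Sum>j<p. a j) \<le> (\<Prod>j<p. a j) + (real p - 1)"
  using assms
proof (induction p rule: nat_induct_non_zero)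
  case (Suc p)
  have "\<bar>\<Prod>j<p. a j\<bar> \<le> 1" "\<bar>a p\<bar> \<le> 1"
    using Suc.prems by (auto simp: abs_prod intro: prod_le_1)
  then have "0 \<le> (1 - (\<Prod>j<p. a j)) * (1 - a p)"
    by (intro mult_nonneg_nonneg) (auto simp: abs_le_iff)
  then show ?case
    using Suc by (simp add: algebra_simps)
qed simp

lemma prod_le_mean_power:
  fixes a :: "nat \<Rightarrow> real"
  assumes "0 < p" "even p"
  shows "(\<Prod>j<p. a j) \<le> (\<Sum>j<p. a j ^ p) / real p"
proof -
  let ?y = "\<Prod>j<p. \<bar>a j\<bar>"
  have "(\<Prod>j<p. \<bar>a j\<bar> ^ p) powr (1 / real p) \<le> (\<Sum>j<p. \<bar>a j\<bar> ^ p / real p)"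
    using arith_geom_mean[of "{..<p}" "\<lambda>j. \<bar>a j\<bar> ^ p"] \<open>0 < p\<close> by (simp add: lessThan_empty_iff)
  moreover have "(\<Prod>j<p. \<bar>a j\<bar> ^ p) powr (1 / real p) = ?y"
  proof (cases "?y = 0")
    case False
    then have "0 < ?y" by (simp add: prod_nonneg order_le_neq_trans)
    have "(\<Prod>j<p. \<bar>a j\<bar> ^ p) = ?y powr real p"
      using \<open>0 < ?y\<close> by (simp add: prod_power_distrib powr_realpow)
    then show ?thesis
      using assms by (simp add: powr_powr prod_nonneg)
  next
    case True
    then show ?thesis
      using assms by (simp only: prod_power_distrib[symmetric] True) simp
  qed
  moreover have "(\<Prod>j<p. a j) \<le> ?y"
    by (simp add: abs_prod[symmetric])
  ultimately show ?thesis
    using assms by (simp add: power_even_abs sum_divide_distrib)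
qed


definition tensor_coef :: "nat \<Rightarrow> (nat \<Rightarrow> nat \<Rightarrow> real) \<Rightarrow> nat list \<Rightarrow> real" where
  "tensor_coef p xs is = (\<Prod>j<p. xs j (is ! j))"

definition sym_tensor_coef :: "nat \<Rightarrow> (nat \<Rightarrow> nat \<Rightarrow> real) \<Rightarrow> nat \<times> nat list \<Rightarrow> real" where
  "sym_tensor_coef p xs z = (\<Prod>k<p. xs (fst z) (snd z ! k))"

lemma sum_scaled_mult: "(\<Sum>z\<in>A. c * f z * (c * g z)) = c\<^sup>2 * (\<Sum>z\<in>A. f z * g z :: real)"
  by (simp add: sum_distrib_left power2_eq_square mult_ac)

lemma sum_tensor_coef_mult:
  "(\<Sum>is\<in>tuples n p. tensor_coef p xs is * tensor_coef p ys is) = (\<Prod>j<p. \<Sum>i<n. xs j i * ys j i)"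
  unfolding tensor_coef_def prod.distrib[symmetric] by (rule sum_tuples_prod)

lemma sum_sym_tensor_coef_mult:
  "(\<Sum>z\<in>{..<p} \<times> tuples n p. sym_tensor_coef p xs z * sym_tensor_coef p ys z)
    = (\<Sum>j<p. (\<Sum>i<n. xs j i * ys j i) ^ p)"
proof -
  have "(\<Sum>is\<in>tuples n p. \<Prod>k<p. xs j (is ! k) * ys j (is ! k)) = (\<Sum>i<n. xs j i * ys j i) ^ p" for j
    using sum_tuples_prod[where f = "\<lambda>k i. xs j i * ys j i" and n = n and p = p] by simp
  then show ?thesis
    unfolding sym_tensor_coef_def sum.cartesian_product' prod.distrib[symmetric] by simp
qed

lemma sum_case_prod_mult:
  "(\<Sum>z\<in>{..<p} \<times> {..<n}. case_prod xs z * case_prod ys z) = (\<Sum>j<p. \<Sum>i<n. xs j i * ys j i)"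
  by (simp add: sum.cartesian_product')

context
  fixes p n :: nat and S :: "nat \<Rightarrow> (nat \<Rightarrow> real) set"
  assumes p_pos: "0 < p" and sphere: "\<And>j. j < p \<Longrightarrow> S j \<subseteq> unit_sphere n"
    and nonempty: "\<And>j. j < p \<Longrightarrow> S j \<noteq> {}"
begin

lemma PiE_nonempty: "Pi\<^sub>E {..<p} S \<noteq> {}"
  using nonempty by (simp add: PiE_eq_empty_iff)

lemma abs_entry_le_1: "xs \<in> Pi\<^sub>E {..<p} S \<Longrightarrow> j < p \<Longrightarrow> \<bar>xs j i\<bar> \<le> 1"
  using sphere by (auto intro: unit_sphere_abs_le_1)

lemma abs_inner_le_1:
  "xs \<in> Pi\<^sub>E {..<p} S \<Longrightarrow> ys \<in> Pi\<^sub>E {..<p} S \<Longrightarrow> j < p \<Longrightarrow> \<bar>\<Sum>i<n. xs j i * ys j i\<bar> \<le> 1"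
  by (intro unit_sphere_abs_inner_le_1) (use sphere in \<open>auto simp: PiE_iff\<close>)

lemma inner_self: "xs \<in> Pi\<^sub>E {..<p} S \<Longrightarrow> j < p \<Longrightarrow> (\<Sum>i<n. xs j i * xs j i) = 1"
  using sphere unfolding unit_sphere_def by (auto simp: power2_eq_square)

lemma abs_tensor_coef_le_1: "xs \<in> Pi\<^sub>E {..<p} S \<Longrightarrow> \<bar>tensor_coef p xs is\<bar> \<le> 1"
  unfolding tensor_coef_def using abs_entry_le_1 by (auto simp: abs_prod intro: prod_le_1)

lemma abs_sym_tensor_coef_le_1:
  "xs \<in> Pi\<^sub>E {..<p} S \<Longrightarrow> z \<in> {..<p} \<times> tuples n p \<Longrightarrow> \<bar>sym_tensor_coef p xs z\<bar> \<le> 1"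
  unfolding sym_tensor_coef_def using abs_entry_le_1 by (auto simp: abs_prod intro: prod_le_1)

lemma abs_scaled_tensor_coef_le:
  assumes "0 \<le> r" "xs \<in> Pi\<^sub>E {..<p} S"
  shows "\<bar>r * tensor_coef p xs is\<bar> \<le> r"
  using mult_left_le[OF abs_tensor_coef_le_1[OF assms(2)] assms(1)] assms(1) by (simp add: abs_mult)

lemma abs_scaled_sym_tensor_coef_le:
  assumes "0 \<le> r" "xs \<in> Pi\<^sub>E {..<p} S" "z \<in> {..<p} \<times> tuples n p"
  shows "\<bar>r * sym_tensor_coef p xs z\<bar> \<le> r"
  using mult_left_le[OF abs_sym_tensor_coef_le_1[OF assms(2,3)] assms(1)] assms(1) by (simp add: abs_mult)

lemma exp_mult_phi:
  assumes "0 < c"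
  shows "exp (c * phi p n S A)
    = exp (SUP xs\<in>Pi\<^sub>E {..<p} S. \<Sum>is\<in>tuples n p. A is * (c * tensor_coef p xs is))"
proof -
  have "c * (SUP xs\<in>Pi\<^sub>E {..<p} S. \<Sum>is\<in>tuples n p. A is * tensor_coef p xs is)
      = (SUP xs\<in>Pi\<^sub>E {..<p} S. \<Sum>is\<in>tuples n p. A is * (c * tensor_coef p xs is))"
    by (rule mult_SUP_linear[where R = 1])
      (use abs_tensor_coef_le_1 PiE_nonempty finite_tuples \<open>0 < c\<close> in auto)
  then show ?thesis unfolding phi_def tensor_coef_def by simp
qed

lemma exp_mult_SUP_sum_process:
  assumes "0 < c"
  shows "exp (c * (SUP xs\<in>Pi\<^sub>E {..<p} S. \<Sum>j<p. \<Sum>i<n. G (j, i) * xs j i))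
    = exp (SUP xs\<in>Pi\<^sub>E {..<p} S. \<Sum>z\<in>{..<p} \<times> {..<n}. G z * (c * case_prod xs z))"
proof -
  have "c * (SUP xs\<in>Pi\<^sub>E {..<p} S. \<Sum>z\<in>{..<p} \<times> {..<n}. G z * case_prod xs z)
      = (SUP xs\<in>Pi\<^sub>E {..<p} S. \<Sum>z\<in>{..<p} \<times> {..<n}. G z * (c * case_prod xs z))"
    by (rule mult_SUP_linear[where R = 1]) (use abs_entry_le_1 PiE_nonempty \<open>0 < c\<close> in auto)
  then show ?thesis by (simp add: sum.cartesian_product')
qed

lemma exp_mult_SUP_sym_tensor_process:
  assumes "0 < c"
  shows "exp (c * (SUP xs\<in>Pi\<^sub>E {..<p} S. \<Sum>j<p. \<Sum>is\<in>tuples n p. B (j, is) * (\<Prod>k<p. xs j (is ! k))))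
    = exp (SUP xs\<in>Pi\<^sub>E {..<p} S. \<Sum>z\<in>{..<p} \<times> tuples n p. B z * (c * sym_tensor_coef p xs z))"
proof -
  have "c * (SUP xs\<in>Pi\<^sub>E {..<p} S. \<Sum>z\<in>{..<p} \<times> tuples n p. B z * sym_tensor_coef p xs z)
      = (SUP xs\<in>Pi\<^sub>E {..<p} S. \<Sum>z\<in>{..<p} \<times> tuples n p. B z * (c * sym_tensor_coef p xs z))"
    by (rule mult_SUP_linear[where R = 1])
      (use abs_sym_tensor_coef_le_1 PiE_nonempty finite_tuples \<open>0 < c\<close> in auto)
  then show ?thesis by (simp add: sum.cartesian_product' sym_tensor_coef_def)
qed

lemma covariance_sum_process_le:
  assumes "xs \<in> Pi\<^sub>E {..<p} S" "ys \<in> Pi\<^sub>E {..<p} S"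
  shows "(\<Sum>z\<in>{..<p} \<times> {..<n}. c * case_prod xs z * (c * case_prod ys z))
    \<le> (\<Sum>is\<in>tuples n p. c * tensor_coef p xs is * (c * tensor_coef p ys is)) + c\<^sup>2 * (real p - 1)"
proof -
  have "(\<Sum>j<p. \<Sum>i<n. xs j i * ys j i) \<le> (\<Prod>j<p. \<Sum>i<n. xs j i * ys j i) + (real p - 1)"
    using p_pos abs_inner_le_1[OF assms] by (intro sum_le_prod_add) auto
  then have "c\<^sup>2 * (\<Sum>j<p. \<Sum>i<n. xs j i * ys j i) \<le> c\<^sup>2 * ((\<Prod>j<p. \<Sum>i<n. xs j i * ys j i) + (real p - 1))"
    by (rule mult_left_mono) simp
  then show ?thesis
    unfolding sum_scaled_mult sum_case_prod_mult sum_tensor_coef_mult by (simp add: distrib_left)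
qed

lemma variance_sum_process:
  assumes "xs \<in> Pi\<^sub>E {..<p} S"
  shows "(\<Sum>z\<in>{..<p} \<times> {..<n}. c * case_prod xs z * (c * case_prod xs z))
    = (\<Sum>is\<in>tuples n p. c * tensor_coef p xs is * (c * tensor_coef p xs is)) + c\<^sup>2 * (real p - 1)"
  unfolding sum_scaled_mult sum_case_prod_mult sum_tensor_coef_mult
  using inner_self[OF assms] by (simp add: algebra_simps)

lemma covariance_tensor_process_le:
  assumes "even p" "xs \<in> Pi\<^sub>E {..<p} S" "ys \<in> Pi\<^sub>E {..<p} S"
  shows "(\<Sum>is\<in>tuples n p. c * tensor_coef p xs is * (c * tensor_coef p ys is))
    \<le> (\<Sum>z\<in>{..<p} \<times> tuples n p. c / sqrt p * sym_tensor_coef p xs z * (c / sqrt p * sym_tensor_coef p ys z)) + 0"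
proof -
  have "c\<^sup>2 * (\<Prod>j<p. \<Sum>i<n. xs j i * ys j i) \<le> c\<^sup>2 * ((\<Sum>j<p. (\<Sum>i<n. xs j i * ys j i) ^ p) / real p)"
    using prod_le_mean_power[OF p_pos \<open>even p\<close>] by (rule mult_left_mono) simp
  then show ?thesis
    unfolding sum_scaled_mult sum_sym_tensor_coef_mult sum_tensor_coef_mult
    using p_pos by (simp add: power_divide)
qed

lemma variance_tensor_process:
  assumes "xs \<in> Pi\<^sub>E {..<p} S"
  shows "(\<Sum>is\<in>tuples n p. c * tensor_coef p xs is * (c * tensor_coef p xs is))
    = (\<Sum>z\<in>{..<p} \<times> tuples n p. c / sqrt p * sym_tensor_coef p xs z * (c / sqrt p * sym_tensor_coef p xs z)) + 0"
  unfolding sum_scaled_mult sum_sym_tensor_coef_mult sum_tensor_coef_mult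
  using inner_self[OF assms] p_pos by (simp add: power_divide)

lemma xi_le_xi_u:
  assumes "0 < c"
  shows "xi p S n c \<le> xi_u p S n c"
proof -
  let ?E = "\<integral>A. exp (c * phi p n S A) \<partial>gauss (tuples n p)"
  let ?E\<^sub>u = "\<integral>G. exp (c * (SUP xs\<in>Pi\<^sub>E {..<p} S. \<Sum>j<p. \<Sum>i<n. G (j, i) * xs j i)) \<partial>gauss ({..<p} \<times> {..<n})"
  have "exp (c\<^sup>2 * (real p - 1) / 2) * ?E \<le> ?E\<^sub>u"
    unfolding exp_mult_phi[OF \<open>0 < c\<close>] exp_mult_SUP_sum_process[OF \<open>0 < c\<close>]
  proof (rule sup_comparison[where R = c])
    show "\<bar>c * tensor_coef p xs is\<bar> \<le> c" if "xs \<in> Pi\<^sub>E {..<p} S" for xs "is"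
      using abs_scaled_tensor_coef_le that \<open>0 < c\<close> by simp
    show "\<bar>c * case_prod xs z\<bar> \<le> c" if "xs \<in> Pi\<^sub>E {..<p} S" "z \<in> {..<p} \<times> {..<n}" for xs z
      using abs_entry_le_1[OF that(1)] that(2) \<open>0 < c\<close> by (auto simp: abs_mult)
  qed (simp_all add: finite_tuples PiE_nonempty covariance_sum_process_le variance_sum_process)
  moreover have "0 < ?E"
    unfolding exp_mult_phi[OF \<open>0 < c\<close>] using abs_scaled_tensor_coef_le PiE_nonempty finite_tuples \<open>0 < c\<close>
    by (intro integral_exp_pos[OF prob_space_gauss] integrable_exp_SUP_linear[where R = c]) auto
  ultimately have "c\<^sup>2 * (real p - 1) / 2 + ln ?E \<le> ln ?E\<^sub>u"
    by (rule add_ln_le_ln_of_exp_mult_le)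
  then have "1/c * ln ?E \<le> - c / 2 * (real p - 1) + 1/c * ln ?E\<^sub>u"
    using \<open>0 < c\<close> by (simp add: field_simps power2_eq_square)
  then show ?thesis
    unfolding xi_def xi_u_def by (intro mult_left_mono) auto
qed

lemma xi_l_le_xi:
  assumes "even p" "0 < c"
  shows "xi_l p S n c \<le> xi p S n c"
proof -
  let ?E = "\<integral>A. exp (c * phi p n S A) \<partial>gauss (tuples n p)"
  let ?E\<^sub>l = "\<integral>B. exp (c / sqrt p * (SUP xs\<in>Pi\<^sub>E {..<p} S.
      \<Sum>j<p. \<Sum>is\<in>tuples n p. B (j, is) * (\<Prod>k<p. xs j (is ! k)))) \<partial>gauss ({..<p} \<times> tuples n p)"
  have "0 < c / sqrt p" "c / sqrt p \<le> c"
    using \<open>0 < c\<close> p_pos by (auto simp: divide_le_eq)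
  have "exp (0 / 2) * ?E\<^sub>l \<le> ?E"
    unfolding exp_mult_phi[OF \<open>0 < c\<close>] exp_mult_SUP_sym_tensor_process[OF \<open>0 < c / sqrt p\<close>]
  proof (rule sup_comparison[where R = c])
    show "\<bar>c * tensor_coef p xs is\<bar> \<le> c" if "xs \<in> Pi\<^sub>E {..<p} S" for xs "is"
      using abs_scaled_tensor_coef_le that \<open>0 < c\<close> by simp
    show "\<bar>c / sqrt p * sym_tensor_coef p xs z\<bar> \<le> c" if "xs \<in> Pi\<^sub>E {..<p} S" "z \<in> {..<p} \<times> tuples n p" for xs z
      using abs_scaled_sym_tensor_coef_le[OF less_imp_le[OF \<open>0 < c / sqrt p\<close>] that] \<open>c / sqrt p \<le> c\<close>
      by (rule order_trans)
    show "(\<Sum>is\<in>tuples n p. c * tensor_coef p t is * (c * tensor_coef p s is))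
        \<le> (\<Sum>z\<in>{..<p} \<times> tuples n p. c / sqrt p * sym_tensor_coef p t z * (c / sqrt p * sym_tensor_coef p s z)) + 0"
      if "s \<in> Pi\<^sub>E {..<p} S" "t \<in> Pi\<^sub>E {..<p} S" for s t
      by (rule covariance_tensor_process_le) (use that \<open>even p\<close> in auto)
  qed (simp_all add: finite_tuples PiE_nonempty variance_tensor_process)
  moreover have "0 < ?E\<^sub>l"
    unfolding exp_mult_SUP_sym_tensor_process[OF \<open>0 < c / sqrt p\<close>]
  proof (intro integral_exp_pos[OF prob_space_gauss] integrable_exp_SUP_linear[where R = "c / sqrt p"])
    show "\<bar>c / sqrt p * sym_tensor_coef p xs z\<bar> \<le> c / sqrt p"
      if "xs \<in> Pi\<^sub>E {..<p} S" "z \<in> {..<p} \<times> tuples n p" for xs z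
      using \<open>0 < c / sqrt p\<close> that by (intro abs_scaled_sym_tensor_coef_le) auto
  qed (simp_all add: PiE_nonempty finite_tuples)
  ultimately show ?thesis
    unfolding xi_def xi_l_def using \<open>0 < c\<close> by (intro mult_left_mono) (auto simp: divide_right_mono)
qed

end

theorem theorem1:
  fixes p n :: nat and S :: "nat \<Rightarrow> (nat \<Rightarrow> real) set" and c3l c3u :: real
  assumes "p > 0" and "even p"
    and "\<And>j. j < p \<Longrightarrow> S j \<subseteq> unit_sphere n"
    and "\<And>j. j < p \<Longrightarrow> S j \<noteq> {}"
    and "c3l > 0" and "c3u > 0"
  shows "xi_l p S n c3l \<le> xi p S n c3l \<and> xi p S n c3u \<le> xi_u p S n c3u"
proof -
  have "xi_l p S n c3l \<le> xi p S n c3l"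
    by (rule xi_l_le_xi) (use assms in auto)
  moreover have "xi p S n c3u \<le> xi_u p S n c3u"
    by (rule xi_le_xi_u) (use assms in auto)
  ultimately show ?thesis ..
qed

end
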